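(* Let $\mathcal{S}$ be a relational schema, $\mathit{IC}$ a finite set of universal integrity constraints, $D$ a database instance (without nulls), and $\mathcal{Q}(\bar x)$ a query given by a non-recursive normal Datalog$^{\mathit{not}}$ program $\Pi^{\mathcal{Q}}$ whose extensional predicates are the $P_{\star\star}$ ($P\in\mathcal{S}$) and built-ins, and whose answer predicate $\mathit{Ans}^{\mathcal{Q}}$ occurs only in rule heads. Let $\Pi^r$ be the repair program $\Pi(\mathit{IC},D)$ without the database facts, and $\Pi=D\cup\Pi^r\cup\Pi^{\mathcal{Q}}$. Then for every tuple of constants $\bar a$: $$D\models_c\mathcal{Q}(\bar a)\iff\{\mathcal{R}(D),\Phi(\Pi^r),\Phi(\Pi^{\mathcal{Q}})\}\models\mathit{Ans}^{\mathcal{Q}}(\bar a),$$ where $\Phi(\Pi^r)$ is the SO sentence specifying the repairs for fixed extensional predicates $P\in\mathcal{S}$, and $\Phi(\Pi^{\mathcal{Q}})$ is the SO sentence specifying the models of the query program for fixed predicates $P_{\star\star}$.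
   Context: A repair of $D$ w.r.t. $\mathit{IC}$ is an instance $D'$ over $\mathcal{S}$ with $D'\models\mathit{IC}$ such that the symmetric difference $\Delta(D,D')$ is minimal under set inclusion among such instances. $\bar a$ is a consistent answer, written $D\models_c\mathcal{Q}(\bar a)$, iff $D'\models\mathcal{Q}(\bar a)$ for every repair $D'$ of $D$ (for a Datalog query: $\bar a$ is an answer to the query program using $D'$ as extensional database). Repair program: for each $P\in\mathcal{S}$ new predicates $P_{\mathbf{t}},P_{\mathbf{f}},P_\star,P_{\star\star}$; rules: facts $P(\bar a)$ for $P(\bar a)\in D$; for each constraint $\forall \bar{x}(\bigwedge_{i=1}^{m} P_i(\bar{x}_i) \rightarrow \bigvee_{j=1}^{n} Q_j(\bar{y}_j) \vee \varphi)$ and each partition $Q'\cup Q''$ of $\{Q_1,\ldots,Q_n\}$ the rule $\bigvee_{i} P_{i,\mathbf{f}}(\bar{x}_i)\vee\bigvee_{j} Q_{j,\mathbf{t}}(\bar y_j)\leftarrow \bigwedge_{i} P_{i,\star}(\bar x_i), \bigwedge_{Q_j\in Q'}Q_{j,\mathbf{f}}(\bar y_j), \bigwedge_{Q_k\in Q''}\mathit{not}\,Q_k(\bar y_k), \bar\varphi$ ($\bar\varphi$ built-ins equivalent to $\neg\varphi$); $P_\star(\bar x)\leftarrow P(\bar x)$; $P_\star(\bar x)\leftarrow P_{\mathbf{t}}(\bar x)$; $P_{\star\star}(\bar x)\leftarrow P_\star(\bar x),\mathit{not}\,P_{\mathbf{f}}(\bar x)$; program constraints $\leftarrow P_{\mathbf{t}}(\bar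 x),P_{\mathbf{f}}(\bar x)$. For a program $\Pi_0$, $\psi(\Pi_0)$ is the conjunction of universal closures of $\mathit{Body}\rightarrow\mathit{Head}$ (commas as $\wedge$, $\mathit{not}$ as $\neg$, constraints $\leftarrow B$ as $\neg B$). Given a set $\bar P$ of predicates to be minimized, $\Phi:=\psi\wedge\neg\exists\bar X((\bar X<\bar P)\wedge\psi^\circ(\bar X))$, where $\bar X$ are predicate variables for $\bar P$, $\bar X<\bar P$ means componentwise inclusion with at least one strict, and $\psi^\circ$ replaces each $P_i\in\bar P$ by $X^{P_i}$ recursively with $(F\rightarrow G)^\circ=(F^\circ\rightarrow G^\circ)\wedge(F\rightarrow G)$, negation written as $\chi\rightarrow\bot$, other connectives, quantifiers, built-ins, $\bot$ and non-minimized predicates unchanged. $\Phi(\Pi^r)$ is this sentence for $\Pi^r$ with $\bar P$ the predicates $P_{\mathbf{t}},P_{\mathbf{f}},P_\star,P_{\star\star}$; $\Phi(\Pi^{\mathcal Q})$ is this sentence for $\Pi^{\mathcal Q}$ with $\bar P$ the predicates defined in $\Pi^{\mathcal Q}$ (not the $P_{\star\star}$). $\mathcal{R}(D)$ is the conjunction of the domain closure axiom over the constants, unique names axioms, and for each $P\in\mathcal{S}$ the completion $\forall\bar x(P(\bar x)\equiv\bigvee_{P(\bar a)\in D}\bar x=\bar a)$. *)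

theory Defs
  imports Main
begin

datatype 'c trm = V nat | Cn 'c

text \<open>Predicate names: for each schema relation P the predicates P, P_t, P_f, P_star, P_starstar;
  and the (disjoint) predicates of the query program.\<close>
datatype ('r,'q) pn = Ext 'r | Tr 'r | Fa 'r | St 'r | SS 'r | Qp 'q

type_synonym ('p,'c) atom = "'p \<times> 'c trm list"
text \<open>A built-in literal (polarity, built-in symbol, arguments).\<close>
type_synonym ('b,'c) blit = "bool \<times> 'b \<times> 'c trm list"

text \<open>Universal IC  forall x. (P_1(x_1) & ... & P_m(x_m) --> Q_1(y_1) | ... | Q_n(y_n) | phi),
  phi a disjunction of built-in literals.\<close>
datatype ('r,'c,'b) ic = IC "('r,'c) atom list" "('r,'c) atom list" "('b,'c) blit list"

text \<open>Disjunctive rule  head <- pos, not neg, built-ins  (empty head = program constraint).\<close>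
datatype ('p,'c,'b) rule = Rule (rhead: "('p,'c) atom list") (rpos: "('p,'c) atom list")
  (rneg: "('p,'c) atom list") (rbis: "('b,'c) blit list")

fun tev :: "('c \<Rightarrow> 'd) \<Rightarrow> (nat \<Rightarrow> 'd) \<Rightarrow> 'c trm \<Rightarrow> 'd" where
  "tev k \<sigma> (V n) = \<sigma> n"
| "tev k \<sigma> (Cn c) = k c"

fun trm_vars :: "'c trm \<Rightarrow> nat set" where
  "trm_vars (V n) = {n}" | "trm_vars (Cn c) = {}"
fun trm_consts :: "'c trm \<Rightarrow> 'c set" where
  "trm_consts (V n) = {}" | "trm_consts (Cn c) = {c}"

definition atom_vars :: "('p,'c) atom \<Rightarrow> nat set" where
  "atom_vars a = \<Union> (trm_vars ` set (snd a))"
definition atom_consts :: "('p,'c) atom \<Rightarrow> 'c set" where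
  "atom_consts a = \<Union> (trm_consts ` set (snd a))"
definition blit_vars :: "('b,'c) blit \<Rightarrow> nat set" where
  "blit_vars l = \<Union> (trm_vars ` set (snd (snd l)))"
definition blit_consts :: "('b,'c) blit \<Rightarrow> 'c set" where
  "blit_consts l = \<Union> (trm_consts ` set (snd (snd l)))"

definition rule_atoms :: "('p,'c,'b) rule \<Rightarrow> ('p,'c) atom set" where
  "rule_atoms r = set (rhead r) \<union> set (rpos r) \<union> set (rneg r)"
definition rule_vars :: "('p,'c,'b) rule \<Rightarrow> nat set" where
  "rule_vars r = \<Union> (atom_vars ` rule_atoms r) \<union> \<Union> (blit_vars ` set (rbis r))"
definition rule_consts :: "('p,'c,'b) rule \<Rightarrow> 'c set" where
  "rule_consts r = \<Union> (atom_consts ` rule_atoms r) \<union> \<Union> (blit_consts ` set (rbis r))"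

fun pn_arity :: "('r \<Rightarrow> nat) \<Rightarrow> ('q \<Rightarrow> nat) \<Rightarrow> ('r,'q) pn \<Rightarrow> nat" where
  "pn_arity ar arq (Ext r) = ar r"
| "pn_arity ar arq (Tr r) = ar r"
| "pn_arity ar arq (Fa r) = ar r"
| "pn_arity ar arq (St r) = ar r"
| "pn_arity ar arq (SS r) = ar r"
| "pn_arity ar arq (Qp q) = arq q"

text \<open>The database domain is the (finite, nonempty) set of constants cs of the language.\<close>
definition instance_over :: "'r list \<Rightarrow> ('r \<Rightarrow> nat) \<Rightarrow> 'c list \<Rightarrow> ('r \<times> 'c list) set \<Rightarrow> bool" where
  "instance_over Sch ar cs I \<longleftrightarrow>
     (\<forall>(P,t)\<in>I. P \<in> set Sch \<and> length t = ar P \<and> set t \<subseteq> set cs)"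

fun ic_sat :: "'c list \<Rightarrow> ('b \<Rightarrow> 'c list \<Rightarrow> bool) \<Rightarrow> ('r \<times> 'c list) set \<Rightarrow> ('r,'c,'b) ic \<Rightarrow> bool" where
  "ic_sat cs bi I (IC B H ph) \<longleftrightarrow>
     (\<forall>\<sigma>. range \<sigma> \<subseteq> set cs \<longrightarrow>
        (\<forall>(P,ts)\<in>set B. (P, map (tev id \<sigma>) ts) \<in> I) \<longrightarrow>
        (\<exists>(Q,ts)\<in>set H. (Q, map (tev id \<sigma>) ts) \<in> I) \<or>
        (\<exists>(pl,b,ts)\<in>set ph. bi b (map (tev id \<sigma>) ts) = pl))"

definition satisfies_ics :: "'c list \<Rightarrow> ('b \<Rightarrow> 'c list \<Rightarrow> bool) \<Rightarrow> ('r,'c,'b) ic list \<Rightarrow> ('r \<times> 'c list) set \<Rightarrow> bool" where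
  "satisfies_ics cs bi ics I \<longleftrightarrow> (\<forall>ic\<in>set ics. ic_sat cs bi I ic)"

definition symdiff :: "'a set \<Rightarrow> 'a set \<Rightarrow> 'a set" where
  "symdiff A B = (A - B) \<union> (B - A)"

definition is_repair :: "'r list \<Rightarrow> ('r \<Rightarrow> nat) \<Rightarrow> 'c list \<Rightarrow> ('b \<Rightarrow> 'c list \<Rightarrow> bool) \<Rightarrow>
    ('r,'c,'b) ic list \<Rightarrow> ('r \<times> 'c list) set \<Rightarrow> ('r \<times> 'c list) set \<Rightarrow> bool" where
  "is_repair Sch ar cs bi ics D D' \<longleftrightarrow>
     instance_over Sch ar cs D' \<and> satisfies_ics cs bi ics D' \<and>
     \<not> (\<exists>D''. instance_over Sch ar cs D'' \<and> satisfies_ics cs bi ics D'' \<and>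
              symdiff D D'' \<subset> symdiff D D')"

definition gatom :: "(nat \<Rightarrow> 'c) \<Rightarrow> ('p,'c) atom \<Rightarrow> 'p \<times> 'c list" where
  "gatom \<sigma> a = (fst a, map (tev id \<sigma>) (snd a))"

definition bis_true :: "('b \<Rightarrow> 'c list \<Rightarrow> bool) \<Rightarrow> (nat \<Rightarrow> 'c) \<Rightarrow> ('b,'c) blit list \<Rightarrow> bool" where
  "bis_true bi \<sigma> bl \<longleftrightarrow> (\<forall>(pl,b,ts)\<in>set bl. bi b (map (tev id \<sigma>) ts) = pl)"

text \<open>N is a model of the Gelfond-Lifschitz reduct of the program w.r.t. M.\<close>
definition reduct_model :: "'c list \<Rightarrow> ('b \<Rightarrow> 'c list \<Rightarrow> bool) \<Rightarrow> ('p,'c,'b) rule list \<Rightarrow>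
    ('p \<times> 'c list) set \<Rightarrow> ('p \<times> 'c list) set \<Rightarrow> bool" where
  "reduct_model cs bi Pr M N \<longleftrightarrow>
     (\<forall>r\<in>set Pr. \<forall>\<sigma>. range \<sigma> \<subseteq> set cs \<longrightarrow>
        (\<forall>a\<in>set (rpos r). gatom \<sigma> a \<in> N) \<longrightarrow>
        (\<forall>a\<in>set (rneg r). gatom \<sigma> a \<notin> M) \<longrightarrow>
        bis_true bi \<sigma> (rbis r) \<longrightarrow>
        (\<exists>a\<in>set (rhead r). gatom \<sigma> a \<in> N))"

definition stable_model :: "'c list \<Rightarrow> ('b \<Rightarrow> 'c list \<Rightarrow> bool) \<Rightarrow> ('p,'c,'b) rule list \<Rightarrow>
    ('p \<times> 'c list) set \<Rightarrow> ('p \<times> 'c list) set \<Rightarrow> bool" where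
  "stable_model cs bi Pr E M \<longleftrightarrow>
     E \<subseteq> M \<and> reduct_model cs bi Pr M M \<and>
     \<not> (\<exists>N. N \<subset> M \<and> E \<subseteq> N \<and> reduct_model cs bi Pr M N)"

definition query_answer :: "'c list \<Rightarrow> ('b \<Rightarrow> 'c list \<Rightarrow> bool) \<Rightarrow> (('r,'q) pn,'c,'b) rule list \<Rightarrow>
    'q \<Rightarrow> ('r \<times> 'c list) set \<Rightarrow> 'c list \<Rightarrow> bool" where
  "query_answer cs bi PQ ans D' a \<longleftrightarrow>
     (\<forall>M. stable_model cs bi PQ {(SS P, t) | P t. (P, t) \<in> D'} M \<longrightarrow> (Qp ans, a) \<in> M)"

definition cons_answer :: "'r list \<Rightarrow> ('r \<Rightarrow> nat) \<Rightarrow> 'c list \<Rightarrow> ('b \<Rightarrow> 'c list \<Rightarrow> bool) \<Rightarrow>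
    ('r,'c,'b) ic list \<Rightarrow> ('r \<times> 'c list) list \<Rightarrow> (('r,'q) pn,'c,'b) rule list \<Rightarrow> 'q \<Rightarrow> 'c list \<Rightarrow> bool" where
  "cons_answer Sch ar cs bi ics D PQ ans a \<longleftrightarrow>
     (\<forall>D'. is_repair Sch ar cs bi ics (set D) D' \<longrightarrow> query_answer cs bi PQ ans D' a)"

definition mapp :: "('p \<Rightarrow> 'p2) \<Rightarrow> ('p,'c) atom \<Rightarrow> ('p2,'c) atom" where
  "mapp f a = (f (fst a), snd a)"

fun ic_rules :: "('r,'c,'b) ic \<Rightarrow> (('r,'q) pn,'c,'b) rule list" where
  "ic_rules (IC B H ph) =
     map (\<lambda>J. Rule (map (mapp Fa) B @ map (mapp Tr) H)
                   (map (mapp St) B @ map (\<lambda>j. mapp Fa (H ! j)) J)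
                   (map (\<lambda>k. mapp Ext (H ! k)) (filter (\<lambda>k. k \<notin> set J) [0..<length H]))
                   (map (\<lambda>(pl,b,ts). (\<not> pl, b, ts)) ph))
         (subseqs [0..<length H])"

definition schema_rules :: "('r \<Rightarrow> nat) \<Rightarrow> 'r \<Rightarrow> (('r,'q) pn,'c,'b) rule list" where
  "schema_rules ar P = (let xs = map V [0..<ar P] in
     [Rule [(St P, xs)] [(Ext P, xs)] [] [],
      Rule [(St P, xs)] [(Tr P, xs)] [] [],
      Rule [(SS P, xs)] [(St P, xs)] [(Fa P, xs)] [],
      Rule [] [(Tr P, xs), (Fa P, xs)] [] []])"

definition repair_prog :: "'r list \<Rightarrow> ('r \<Rightarrow> nat) \<Rightarrow> ('r,'c,'b) ic list \<Rightarrow> (('r,'q) pn,'c,'b) rule list" where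
  "repair_prog Sch ar ics = concat (map ic_rules ics) @ concat (map (schema_rules ar) Sch)"

definition repair_preds :: "'r list \<Rightarrow> ('r,'q) pn set" where
  "repair_preds Sch = {p. \<exists>P\<in>set Sch. p = Tr P \<or> p = Fa P \<or> p = St P \<or> p = SS P}"

text \<open>FAtom: predicate symbol; XAtom p: the predicate variable X^p.\<close>
datatype ('p,'c,'b) fm = FAtom 'p "'c trm list" | XAtom 'p "'c trm list" | FBi 'b "'c trm list"
  | FEq "'c trm" "'c trm" | FBot | FAnd "('p,'c,'b) fm" "('p,'c,'b) fm"
  | FOr "('p,'c,'b) fm" "('p,'c,'b) fm" | FImp "('p,'c,'b) fm" "('p,'c,'b) fm"
  | FAll nat "('p,'c,'b) fm" | FEx nat "('p,'c,'b) fm"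

definition fneg :: "('p,'c,'b) fm \<Rightarrow> ('p,'c,'b) fm" where "fneg f = FImp f FBot"
definition ftop :: "('p,'c,'b) fm" where "ftop = FImp FBot FBot"
definition fconj :: "('p,'c,'b) fm list \<Rightarrow> ('p,'c,'b) fm" where "fconj fs = foldr FAnd fs ftop"
definition fdisj :: "('p,'c,'b) fm list \<Rightarrow> ('p,'c,'b) fm" where "fdisj fs = foldr FOr fs FBot"
definition fiff :: "('p,'c,'b) fm \<Rightarrow> ('p,'c,'b) fm \<Rightarrow> ('p,'c,'b) fm" where
  "fiff f g = FAnd (FImp f g) (FImp g f)"
definition fclose :: "nat set \<Rightarrow> ('p,'c,'b) fm \<Rightarrow> ('p,'c,'b) fm" where
  "fclose vs f = foldr FAll (sorted_list_of_set vs) f"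

definition blit_fm :: "('b,'c) blit \<Rightarrow> ('p,'c,'b) fm" where
  "blit_fm l = (case l of (pl,b,ts) \<Rightarrow> if pl then FBi b ts else fneg (FBi b ts))"

definition psi_rule :: "('p,'c,'b) rule \<Rightarrow> ('p,'c,'b) fm" where
  "psi_rule r = fclose (rule_vars r)
     (FImp (fconj (map (\<lambda>(p,ts). FAtom p ts) (rpos r) @
                   map (\<lambda>(p,ts). fneg (FAtom p ts)) (rneg r) @ map blit_fm (rbis r)))
           (fdisj (map (\<lambda>(p,ts). FAtom p ts) (rhead r))))"

definition psi :: "('p,'c,'b) rule list \<Rightarrow> ('p,'c,'b) fm" where
  "psi Pr = fconj (map psi_rule Pr)"

fun circ :: "'p set \<Rightarrow> ('p,'c,'b) fm \<Rightarrow> ('p,'c,'b) fm" where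
  "circ Ps (FAtom p ts) = (if p \<in> Ps then XAtom p ts else FAtom p ts)"
| "circ Ps (XAtom p ts) = XAtom p ts"
| "circ Ps (FBi b ts) = FBi b ts"
| "circ Ps (FEq s t) = FEq s t"
| "circ Ps FBot = FBot"
| "circ Ps (FAnd f g) = FAnd (circ Ps f) (circ Ps g)"
| "circ Ps (FOr f g) = FOr (circ Ps f) (circ Ps g)"
| "circ Ps (FImp f g) = FAnd (FImp (circ Ps f) (circ Ps g)) (FImp f g)"
| "circ Ps (FAll v f) = FAll v (circ Ps f)"
| "circ Ps (FEx v f) = FEx v (circ Ps f)"

record ('d,'c,'p,'b) struct =
  sdom :: "'d set"
  cint :: "'c \<Rightarrow> 'd"
  pint :: "'p \<Rightarrow> 'd list set"
  bint :: "'b \<Rightarrow> 'd list \<Rightarrow> bool"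

fun eval :: "('d,'c,'p,'b) struct \<Rightarrow> ('p \<Rightarrow> 'd list set) \<Rightarrow> (nat \<Rightarrow> 'd) \<Rightarrow> ('p,'c,'b) fm \<Rightarrow> bool" where
  "eval S X \<sigma> (FAtom p ts) = (map (tev (cint S) \<sigma>) ts \<in> pint S p)"
| "eval S X \<sigma> (XAtom p ts) = (map (tev (cint S) \<sigma>) ts \<in> X p)"
| "eval S X \<sigma> (FBi b ts) = bint S b (map (tev (cint S) \<sigma>) ts)"
| "eval S X \<sigma> (FEq s t) = (tev (cint S) \<sigma> s = tev (cint S) \<sigma> t)"
| "eval S X \<sigma> FBot = False"
| "eval S X \<sigma> (FAnd f g) = (eval S X \<sigma> f \<and> eval S X \<sigma> g)"
| "eval S X \<sigma> (FOr f g) = (eval S X \<sigma> f \<or> eval S X \<sigma> g)"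
| "eval S X \<sigma> (FImp f g) = (eval S X \<sigma> f \<longrightarrow> eval S X \<sigma> g)"
| "eval S X \<sigma> (FAll v f) = (\<forall>d\<in>sdom S. eval S X (\<sigma>(v := d)) f)"
| "eval S X \<sigma> (FEx v f) = (\<exists>d\<in>sdom S. eval S X (\<sigma>(v := d)) f)"

definition holds_with :: "('d,'c,'p,'b) struct \<Rightarrow> ('p \<Rightarrow> 'd list set) \<Rightarrow> ('p,'c,'b) fm \<Rightarrow> bool" where
  "holds_with S X f \<longleftrightarrow> (\<forall>\<sigma>. range \<sigma> \<subseteq> sdom S \<longrightarrow> eval S X \<sigma> f)"

text \<open>SO sentences: FO sentences, and Phi = psi & ~ (exists Xs. Xs < Ps & psi^circ(Xs)).\<close>
datatype ('p,'c,'b) so_sent = FO "('p,'c,'b) fm" | SOMin "'p set" "('p,'c,'b) fm"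

fun so_holds :: "('d,'c,'p,'b) struct \<Rightarrow> ('p,'c,'b) so_sent \<Rightarrow> bool" where
  "so_holds S (FO f) = holds_with S (\<lambda>_. {}) f"
| "so_holds S (SOMin Ps f) =
     (holds_with S (\<lambda>_. {}) f \<and>
      \<not> (\<exists>X. (\<forall>p\<in>Ps. X p \<subseteq> pint S p) \<and> (\<exists>p\<in>Ps. X p \<subset> pint S p) \<and>
             holds_with S X (circ Ps f)))"

text \<open>Every structure satisfying the domain closure axiom over cs is isomorphic to one whose domain is
  a subset of the constant type, so quantifying over those structures gives SO entailment.\<close>
definition wf_struct :: "('p \<Rightarrow> nat) \<Rightarrow> 'c list \<Rightarrow> ('b \<Rightarrow> 'c list \<Rightarrow> bool) \<Rightarrow> ('d,'c,'p,'b) struct \<Rightarrow> bool" where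
  "wf_struct arity cs bi S \<longleftrightarrow>
     sdom S \<noteq> {} \<and> (\<forall>c\<in>set cs. cint S c \<in> sdom S) \<and>
     (\<forall>p. \<forall>t\<in>pint S p. length t = arity p \<and> set t \<subseteq> sdom S) \<and>
     (\<forall>b as. set as \<subseteq> set cs \<longrightarrow> bint S b (map (cint S) as) = bi b as)"

definition so_entails :: "('p \<Rightarrow> nat) \<Rightarrow> 'c list \<Rightarrow> ('b \<Rightarrow> 'c list \<Rightarrow> bool) \<Rightarrow>
    ('p,'c,'b) so_sent set \<Rightarrow> ('p,'c,'b) fm \<Rightarrow> bool" where
  "so_entails arity cs bi \<Gamma> f \<longleftrightarrow>
     (\<forall>S :: ('c,'c,'p,'b) struct. wf_struct arity cs bi S \<longrightarrow>
        (\<forall>g\<in>\<Gamma>. so_holds S g) \<longrightarrow> so_holds S (FO f))"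

definition RD :: "'r list \<Rightarrow> ('r \<Rightarrow> nat) \<Rightarrow> 'c list \<Rightarrow> ('r \<times> 'c list) list \<Rightarrow> (('r,'q) pn,'c,'b) fm" where
  "RD Sch ar cs D = fconj
     ([FAll 0 (fdisj (map (\<lambda>c. FEq (V 0) (Cn c)) cs)),
       fconj [fneg (FEq (Cn c) (Cn d)). c \<leftarrow> cs, d \<leftarrow> cs, c \<noteq> d]] @
      map (\<lambda>P. foldr FAll [0..<ar P]
                 (fiff (FAtom (Ext P) (map V [0..<ar P]))
                       (fdisj [fconj (map (\<lambda>i. FEq (V i) (Cn (t ! i))) [0..<ar P]).
                               (Q, t) \<leftarrow> D, Q = P]))) Sch)"

definition wf_db :: "'r list \<Rightarrow> ('r \<Rightarrow> nat) \<Rightarrow> 'c list \<Rightarrow> ('r \<times> 'c list) list \<Rightarrow> bool" where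
  "wf_db Sch ar cs D \<longleftrightarrow> (\<forall>(P,t)\<in>set D. P \<in> set Sch \<and> length t = ar P \<and> set t \<subseteq> set cs)"

fun wf_ic :: "'r list \<Rightarrow> ('r \<Rightarrow> nat) \<Rightarrow> 'c list \<Rightarrow> ('r,'c,'b) ic \<Rightarrow> bool" where
  "wf_ic Sch ar cs (IC B H ph) \<longleftrightarrow>
     (\<forall>a\<in>set B \<union> set H. fst a \<in> set Sch \<and> length (snd a) = ar (fst a) \<and> atom_consts a \<subseteq> set cs) \<and>
     (\<forall>l\<in>set ph. blit_consts l \<subseteq> set cs)"

definition defined_preds :: "('p,'c,'b) rule list \<Rightarrow> 'p set" where
  "defined_preds Pr = {p. \<exists>r\<in>set Pr. p \<in> fst ` set (rhead r)}"

definition deps :: "('p,'c,'b) rule list \<Rightarrow> ('p \<times> 'p) set" where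
  "deps Pr = {(p,q). \<exists>r\<in>set Pr. q \<in> fst ` set (rhead r) \<and> p \<in> fst ` (set (rpos r) \<union> set (rneg r))}"

definition query_program :: "'r list \<Rightarrow> ('r \<Rightarrow> nat) \<Rightarrow> ('q \<Rightarrow> nat) \<Rightarrow> 'c list \<Rightarrow> 'q \<Rightarrow>
    (('r,'q) pn,'c,'b) rule list \<Rightarrow> bool" where
  "query_program Sch ar arq cs ans PQ \<longleftrightarrow>
     (\<forall>r\<in>set PQ. length (rhead r) = 1) \<and>
     (\<forall>r\<in>set PQ. \<forall>a\<in>set (rhead r). \<exists>q. fst a = Qp q) \<and>
     (\<forall>r\<in>set PQ. \<forall>a\<in>set (rpos r) \<union> set (rneg r).
        (\<exists>P\<in>set Sch. fst a = SS P) \<or> fst a \<in> defined_preds PQ) \<and>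
     (\<forall>r\<in>set PQ. \<forall>a\<in>set (rpos r) \<union> set (rneg r). fst a \<noteq> Qp ans) \<and>
     acyclic (deps PQ) \<and>
     (\<forall>r\<in>set PQ. rule_vars r \<subseteq> \<Union> (atom_vars ` set (rpos r))) \<and>
     (\<forall>r\<in>set PQ. \<forall>a\<in>rule_atoms r. length (snd a) = pn_arity ar arq (fst a)) \<and>
     (\<forall>r\<in>set PQ. rule_consts r \<subseteq> set cs)"

end

theory Submission
  imports Defs
begin

text \<open>A structure satisfying R(D) is, up to renaming, a Herbrand structure over the constants,
  and on it the sentence psi \<and> \<not> (\<exists>X < P. psi^circ(X)) says exactly that the set M of
  true ground atoms is a model of the Gelfond-Lifschitz reduct Pi^M that no smaller model
  agreeing with M outside the minimised predicates P satisfies: M is a stable model of Pi with the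
  predicates outside P fixed.

  For the repair program with P_t, P_f, P_star, P_starstar minimised over the fixed database D,
  such an M is determined by the instance D' read off from it: M records D' - D in P_t, D - D' in
  P_f, D \<union> D' in P_star and D' in P_starstar. Inclusion between two such records is
  inclusion between the symmetric differences with D, and the rules for the constraints hold
  exactly when D' satisfies IC; hence minimality of M is minimality of D', i.e. M encodes a repair.
  For the query program with the P_starstar fixed, the same minimality is the ordinary
  stable-model condition with the facts of D' as extensional database. So the models of the three
  sentences are the pairs of a repair and a stable model of the query program over it, and
  Ans(a) holds in all of them iff a is a consistent answer.\<close>

lemma eval_fconj [simp]: "eval S X \<sigma> (fconj fs) \<longleftrightarrow> (\<forall>g\<in>set fs. eval S X \<sigma> g)"
  by (induction fs) (auto simp: fconj_def ftop_def)

lemma eval_fdisj [simp]: "eval S X \<sigma> (fdisj fs) \<longleftrightarrow> (\<exists>g\<in>set fs. eval S X \<sigma> g)"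
  by (induction fs) (auto simp: fdisj_def)

lemma eval_circ_fconj: "eval S X \<sigma> (circ Ps (fconj fs)) \<longleftrightarrow> (\<forall>g\<in>set fs. eval S X \<sigma> (circ Ps g))"
  by (induction fs) (auto simp: fconj_def ftop_def)

lemma eval_circ_fdisj: "eval S X \<sigma> (circ Ps (fdisj fs)) \<longleftrightarrow> (\<exists>g\<in>set fs. eval S X \<sigma> (circ Ps g))"
  by (induction fs) (auto simp: fdisj_def)

lemma circ_foldr_FAll: "circ Ps (foldr FAll vs f) = foldr FAll vs (circ Ps f)"
  by (induction vs) auto

lemma eval_circ_empty [simp]: "eval S X \<sigma> (circ {} f) \<longleftrightarrow> eval S X \<sigma> f"
  by (induction f arbitrary: \<sigma>) auto

lemma holds_fconj: "holds_with S X (fconj fs) \<longleftrightarrow> (\<forall>g\<in>set fs. holds_with S X g)"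
  unfolding holds_with_def by auto

lemma holds_circ_fconj:
  "holds_with S X (circ Ps (fconj fs)) \<longleftrightarrow> (\<forall>g\<in>set fs. holds_with S X (circ Ps g))"
  unfolding holds_with_def by (auto simp: eval_circ_fconj)

lemma holds_FAll: "holds_with S X (FAll v f) \<longleftrightarrow> holds_with S X f"
  unfolding holds_with_def
proof (intro iffI allI impI)
  fix \<sigma> :: "nat \<Rightarrow> 'a"
  assume all: "\<forall>\<sigma>. range \<sigma> \<subseteq> sdom S \<longrightarrow> eval S X \<sigma> (FAll v f)"
    and \<sigma>: "range \<sigma> \<subseteq> sdom S"
  have "\<forall>d\<in>sdom S. eval S X (\<sigma>(v := d)) f" using all \<sigma> by simp
  moreover have "\<sigma> v \<in> sdom S" using \<sigma> by auto
  ultimately have "eval S X (\<sigma>(v := \<sigma> v)) f" by (rule bspec)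
  then show "eval S X \<sigma> f" by simp
next
  fix \<sigma> :: "nat \<Rightarrow> 'a"
  assume all: "\<forall>\<sigma>. range \<sigma> \<subseteq> sdom S \<longrightarrow> eval S X \<sigma> f"
    and \<sigma>: "range \<sigma> \<subseteq> sdom S"
  have "range (\<sigma>(v := d)) \<subseteq> sdom S" if "d \<in> sdom S" for d
    using \<sigma> that by (auto simp: image_subset_iff)
  then show "eval S X \<sigma> (FAll v f)" using all by simp
qed

lemma holds_foldr_FAll: "holds_with S X (foldr FAll vs f) \<longleftrightarrow> holds_with S X f"
  by (induction vs) (simp_all add: holds_FAll)

lemma all_valuations_image_iff:
  fixes f :: "'a \<Rightarrow> 'b" and P :: "(nat \<Rightarrow> 'b) \<Rightarrow> bool"
  shows "(\<forall>\<sigma>. range \<sigma> \<subseteq> f ` A \<longrightarrow> P \<sigma>) \<longleftrightarrow> (\<forall>\<sigma>. range \<sigma> \<subseteq> A \<longrightarrow> P (f \<circ> \<sigma>))"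
proof
  assume "\<forall>\<sigma>. range \<sigma> \<subseteq> f ` A \<longrightarrow> P \<sigma>"
  then show "\<forall>\<sigma>. range \<sigma> \<subseteq> A \<longrightarrow> P (f \<circ> \<sigma>)" by (auto simp: image_subset_iff)
next
  assume all: "\<forall>\<sigma>. range \<sigma> \<subseteq> A \<longrightarrow> P (f \<circ> \<sigma>)"
  show "\<forall>\<sigma>. range \<sigma> \<subseteq> f ` A \<longrightarrow> P \<sigma>"
  proof (intro allI impI)
    fix \<sigma> :: "nat \<Rightarrow> 'b" assume \<sigma>: "range \<sigma> \<subseteq> f ` A"
    have "range (inv_into A f \<circ> \<sigma>) \<subseteq> A" using \<sigma> by (auto simp: image_subset_iff inv_into_into)
    moreover have "f \<circ> (inv_into A f \<circ> \<sigma>) = \<sigma>"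
    proof
      fix x have "\<sigma> x \<in> f ` A" using \<sigma> by auto
      then show "(f \<circ> (inv_into A f \<circ> \<sigma>)) x = \<sigma> x" by (simp add: f_inv_into_f)
    qed
    ultimately show "P \<sigma>" using all by metis
  qed
qed

lemma all_valuations_tuple_iff:
  assumes "a \<in> A"
  shows "(\<forall>\<sigma>::nat \<Rightarrow> 'a. range \<sigma> \<subseteq> A \<longrightarrow> \<Psi> (map \<sigma> [0..<n])) \<longleftrightarrow>
         (\<forall>u. length u = n \<longrightarrow> set u \<subseteq> A \<longrightarrow> \<Psi> u)"
proof (intro iffI allI impI)
  fix u :: "'a list"
  assume all: "\<forall>\<sigma>::nat \<Rightarrow> 'a. range \<sigma> \<subseteq> A \<longrightarrow> \<Psi> (map \<sigma> [0..<n])"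
    and u: "length u = n" "set u \<subseteq> A"
  define \<sigma> where "\<sigma> i = (if i < n then u ! i else a)" for i
  have "range \<sigma> \<subseteq> A" using u assms by (auto simp: \<sigma>_def)
  moreover have "map \<sigma> [0..<n] = u" using u by (intro nth_equalityI) (auto simp: \<sigma>_def)
  ultimately show "\<Psi> u" using all by metis
next
  fix \<sigma> :: "nat \<Rightarrow> 'a"
  assume "\<forall>u. length u = n \<longrightarrow> set u \<subseteq> A \<longrightarrow> \<Psi> u" and "range \<sigma> \<subseteq> A"
  moreover have "set (map \<sigma> [0..<n]) \<subseteq> A" using \<open>range \<sigma> \<subseteq> A\<close> by auto
  ultimately show "\<Psi> (map \<sigma> [0..<n])" by simp
qed

lemma tev_comp: "tev f (f \<circ> \<sigma>) t = f (tev id \<sigma> t)"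
  by (cases t) auto

lemma map_tev_comp: "map (tev f (f \<circ> \<sigma>)) ts = map f (map (tev id \<sigma>) ts)"
  by (simp add: tev_comp)

lemma map_tev_subset:
  assumes "range \<sigma> \<subseteq> A" "\<Union> (trm_consts ` set ts) \<subseteq> A"
  shows "set (map (tev id \<sigma>) ts) \<subseteq> A"
proof -
  have "tev id \<sigma> t \<in> A" if "t \<in> set ts" for t
  proof (cases t)
    case (V n) then show ?thesis using assms(1) by auto
  next
    case (Cn c)
    have "trm_consts t \<subseteq> A" using assms(2) that by (auto simp del: trm_consts.simps)
    then show ?thesis using Cn by simp
  qed
  then show ?thesis by auto
qed

lemma gatom_in:
  "range \<sigma> \<subseteq> A \<Longrightarrow> atom_consts a \<subseteq> A \<Longrightarrow> set (snd (gatom \<sigma> a)) \<subseteq> A"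
  using map_tev_subset[of \<sigma> A "snd a"] by (simp add: gatom_def atom_consts_def)

lemma fst_gatom [simp]: "fst (gatom \<sigma> a) = fst a"
  by (simp add: gatom_def)

section \<open>The minimisation sentence on Herbrand structures\<close>

definition ground_facts :: "'c list \<Rightarrow> ('c \<Rightarrow> 'd) \<Rightarrow> ('p \<Rightarrow> 'd list set) \<Rightarrow> ('p \<times> 'c list) set" where
  "ground_facts cs f J = {(p,t). set t \<subseteq> set cs \<and> map f t \<in> J p}"

lemma ground_facts_override_subset:
  assumes "\<forall>p\<in>Ps. X p \<subseteq> J p"
  shows "ground_facts cs f (override_on J X Ps) \<subseteq> ground_facts cs f J"
proof
  fix x assume x: "x \<in> ground_facts cs f (override_on J X Ps)"
  obtain p t where "x = (p,t)" by force
  then show "x \<in> ground_facts cs f J" using assms x by (cases "p \<in> Ps") (auto simp: ground_facts_def)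
qed

lemma eval_circ_atom:
  assumes "range \<sigma> \<subseteq> set cs" "atom_consts a \<subseteq> set cs"
  shows "eval S X (cint S \<circ> \<sigma>) (circ Ps (case a of (p,ts) \<Rightarrow> FAtom p ts)) \<longleftrightarrow>
         gatom \<sigma> a \<in> ground_facts cs (cint S) (override_on (pint S) X Ps)"
  using gatom_in[OF assms]
  by (cases a) (simp add: ground_facts_def gatom_def map_tev_comp override_on_def del: map_map)

lemma eval_circ_neg_atom:
  assumes "range \<sigma> \<subseteq> set cs" "atom_consts a \<subseteq> set cs"
  shows "eval S X (cint S \<circ> \<sigma>) (circ Ps (case a of (p,ts) \<Rightarrow> fneg (FAtom p ts))) \<longleftrightarrow>
         gatom \<sigma> a \<notin> ground_facts cs (cint S) (override_on (pint S) X Ps) \<and>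
         gatom \<sigma> a \<notin> ground_facts cs (cint S) (pint S)"
  using gatom_in[OF assms]
  by (cases a) (simp add: ground_facts_def gatom_def map_tev_comp override_on_def fneg_def del: map_map)

lemma eval_circ_blit:
  assumes "range \<sigma> \<subseteq> set cs" "blit_consts l \<subseteq> set cs"
    and bi: "\<forall>b as. set as \<subseteq> set cs \<longrightarrow> bint S b (map (cint S) as) = bi b as"
  shows "eval S X (cint S \<circ> \<sigma>) (circ Ps (blit_fm l)) \<longleftrightarrow>
         (case l of (pl,b,ts) \<Rightarrow> bi b (map (tev id \<sigma>) ts) = pl)"
proof -
  obtain pl b ts where l: "l = (pl,b,ts)" by (cases l)
  have "set (map (tev id \<sigma>) ts) \<subseteq> set cs"
    using map_tev_subset[OF assms(1)] assms(2) l by (simp add: blit_consts_def)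
  then have "bint S b (map (tev (cint S) (cint S \<circ> \<sigma>)) ts) = bi b (map (tev id \<sigma>) ts)"
    using bi by (simp add: map_tev_comp del: map_map)
  then show ?thesis using l by (auto simp: blit_fm_def fneg_def)
qed

definition rule_sat :: "('b \<Rightarrow> 'c list \<Rightarrow> bool) \<Rightarrow> ('p,'c,'b) rule \<Rightarrow>
    ('p \<times> 'c list) set \<Rightarrow> ('p \<times> 'c list) set \<Rightarrow> (nat \<Rightarrow> 'c) \<Rightarrow> bool" where
  "rule_sat bi r M N \<sigma> \<longleftrightarrow>
     ((\<forall>a\<in>set (rpos r). gatom \<sigma> a \<in> N) \<longrightarrow> (\<forall>a\<in>set (rneg r). gatom \<sigma> a \<notin> M) \<longrightarrow>
      bis_true bi \<sigma> (rbis r) \<longrightarrow> (\<exists>a\<in>set (rhead r). gatom \<sigma> a \<in> N))"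

lemma reduct_model_iff_rule_sat:
  "reduct_model cs bi Pr M N \<longleftrightarrow> (\<forall>r\<in>set Pr. \<forall>\<sigma>. range \<sigma> \<subseteq> set cs \<longrightarrow> rule_sat bi r M N \<sigma>)"
  by (simp add: reduct_model_def rule_sat_def)

lemma rule_consts_subsetD:
  assumes "rule_consts r \<subseteq> A"
  shows "a \<in> set (rhead r) \<Longrightarrow> atom_consts a \<subseteq> A" "a \<in> set (rpos r) \<Longrightarrow> atom_consts a \<subseteq> A"
    "a \<in> set (rneg r) \<Longrightarrow> atom_consts a \<subseteq> A" "l \<in> set (rbis r) \<Longrightarrow> blit_consts l \<subseteq> A"
  using assms by (auto simp: rule_consts_def rule_atoms_def)

lemma eval_circ_rule_body:
  assumes \<sigma>: "range \<sigma> \<subseteq> set cs" and r: "rule_consts r \<subseteq> set cs"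
    and bi: "\<forall>b as. set as \<subseteq> set cs \<longrightarrow> bint S b (map (cint S) as) = bi b as"
    and X: "\<forall>p\<in>Ps. X p \<subseteq> pint S p"
  shows "eval S X (cint S \<circ> \<sigma>) (circ Ps (fconj (map (\<lambda>(p,ts). FAtom p ts) (rpos r) @
           map (\<lambda>(p,ts). fneg (FAtom p ts)) (rneg r) @ map blit_fm (rbis r)))) \<longleftrightarrow>
     (\<forall>a\<in>set (rpos r). gatom \<sigma> a \<in> ground_facts cs (cint S) (override_on (pint S) X Ps)) \<and>
     (\<forall>a\<in>set (rneg r). gatom \<sigma> a \<notin> ground_facts cs (cint S) (pint S)) \<and> bis_true bi \<sigma> (rbis r)"
proof -
  have pos: "(\<forall>a\<in>set (rpos r). eval S X (cint S \<circ> \<sigma>) (circ Ps (case a of (p,ts) \<Rightarrow> FAtom p ts)))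
     \<longleftrightarrow> (\<forall>a\<in>set (rpos r). gatom \<sigma> a \<in> ground_facts cs (cint S) (override_on (pint S) X Ps))"
    using eval_circ_atom[OF \<sigma>] rule_consts_subsetD(2)[OF r] by blast
  have neg: "(\<forall>a\<in>set (rneg r). eval S X (cint S \<circ> \<sigma>) (circ Ps (case a of (p,ts) \<Rightarrow> fneg (FAtom p ts))))
     \<longleftrightarrow> (\<forall>a\<in>set (rneg r). gatom \<sigma> a \<notin> ground_facts cs (cint S) (pint S))"
    using eval_circ_neg_atom[OF \<sigma>] rule_consts_subsetD(3)[OF r] ground_facts_override_subset[OF X]
    by blast
  have bis: "(\<forall>l\<in>set (rbis r). eval S X (cint S \<circ> \<sigma>) (circ Ps (blit_fm l))) \<longleftrightarrow> bis_true bi \<sigma> (rbis r)"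
    using eval_circ_blit[OF \<sigma> _ bi] rule_consts_subsetD(4)[OF r] unfolding bis_true_def by fastforce
  show ?thesis
    unfolding eval_circ_fconj set_append set_map ball_Un Ball_image_comp
    using pos[unfolded comp_def] neg[unfolded comp_def] bis[unfolded comp_def] by (simp add: comp_def)
qed

lemma eval_circ_rule_head:
  assumes \<sigma>: "range \<sigma> \<subseteq> set cs" and r: "rule_consts r \<subseteq> set cs"
  shows "eval S X (cint S \<circ> \<sigma>) (circ Ps (fdisj (map (\<lambda>(p,ts). FAtom p ts) (rhead r)))) \<longleftrightarrow>
     (\<exists>a\<in>set (rhead r). gatom \<sigma> a \<in> ground_facts cs (cint S) (override_on (pint S) X Ps))"
proof -
  have "\<forall>a\<in>set (rhead r). eval S X (cint S \<circ> \<sigma>) (circ Ps (case a of (p,ts) \<Rightarrow> FAtom p ts)) \<longleftrightarrow>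
     gatom \<sigma> a \<in> ground_facts cs (cint S) (override_on (pint S) X Ps)"
    using eval_circ_atom[OF \<sigma>] rule_consts_subsetD(1)[OF r] by blast
  then show ?thesis unfolding eval_circ_fdisj set_map bex_simps by (simp add: comp_def)
qed

lemma eval_circ_psi_rule_body:
  assumes "range \<sigma> \<subseteq> set cs" "rule_consts r \<subseteq> set cs"
    and bi: "\<forall>b as. set as \<subseteq> set cs \<longrightarrow> bint S b (map (cint S) as) = bi b as"
    and X: "\<forall>p\<in>Ps. X p \<subseteq> pint S p"
  shows "eval S X (cint S \<circ> \<sigma>) (circ Ps (FImp (fconj (map (\<lambda>(p,ts). FAtom p ts) (rpos r) @
           map (\<lambda>(p,ts). fneg (FAtom p ts)) (rneg r) @ map blit_fm (rbis r)))
           (fdisj (map (\<lambda>(p,ts). FAtom p ts) (rhead r))))) \<longleftrightarrow>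
     rule_sat bi r (ground_facts cs (cint S) (pint S)) (ground_facts cs (cint S) (pint S)) \<sigma> \<and>
     rule_sat bi r (ground_facts cs (cint S) (pint S))
       (ground_facts cs (cint S) (override_on (pint S) X Ps)) \<sigma>"
proof -
  have X0: "\<forall>p\<in>{}. X p \<subseteq> pint S p" by simp
  note body = eval_circ_rule_body[OF assms(1,2) bi X]
  note body0 = eval_circ_rule_body[OF assms(1,2) bi X0, unfolded eval_circ_empty override_on_emptyset]
  note head = eval_circ_rule_head[OF assms(1,2), of S X Ps]
  note head0 = eval_circ_rule_head[OF assms(1,2), of S X "{}", unfolded eval_circ_empty override_on_emptyset]
  show ?thesis unfolding circ.simps eval.simps body body0 head head0 rule_sat_def by blast
qed

lemma holds_circ_psi:
  assumes dom: "sdom S = cint S ` set cs"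
    and bi: "\<forall>b as. set as \<subseteq> set cs \<longrightarrow> bint S b (map (cint S) as) = bi b as"
    and rules_cs: "\<forall>r\<in>set Pr. rule_consts r \<subseteq> set cs"
    and X: "\<forall>p\<in>Ps. X p \<subseteq> pint S p"
  shows "holds_with S X (circ Ps (psi Pr)) \<longleftrightarrow>
     reduct_model cs bi Pr (ground_facts cs (cint S) (pint S)) (ground_facts cs (cint S) (pint S)) \<and>
     reduct_model cs bi Pr (ground_facts cs (cint S) (pint S))
       (ground_facts cs (cint S) (override_on (pint S) X Ps))"
proof -
  have "holds_with S X (circ Ps (psi_rule r)) \<longleftrightarrow>
     (\<forall>\<sigma>. range \<sigma> \<subseteq> set cs \<longrightarrow>
       rule_sat bi r (ground_facts cs (cint S) (pint S)) (ground_facts cs (cint S) (pint S)) \<sigma> \<and>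
       rule_sat bi r (ground_facts cs (cint S) (pint S))
         (ground_facts cs (cint S) (override_on (pint S) X Ps)) \<sigma>)"
    if "r \<in> set Pr" for r
    unfolding psi_rule_def fclose_def circ_foldr_FAll holds_foldr_FAll
    unfolding holds_with_def dom all_valuations_image_iff
    using eval_circ_psi_rule_body[OF _ _ bi X] rules_cs that by blast
  then show ?thesis
    unfolding psi_def holds_circ_fconj reduct_model_iff_rule_sat by auto
qed

lemma holds_psi:
  assumes "sdom S = cint S ` set cs"
    and "\<forall>b as. set as \<subseteq> set cs \<longrightarrow> bint S b (map (cint S) as) = bi b as"
    and "\<forall>r\<in>set Pr. rule_consts r \<subseteq> set cs"
  shows "holds_with S X (psi Pr) \<longleftrightarrow>
     reduct_model cs bi Pr (ground_facts cs (cint S) (pint S)) (ground_facts cs (cint S) (pint S))"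
proof -
  have "holds_with S X (psi Pr) \<longleftrightarrow> holds_with S X (circ {} (psi Pr))"
    unfolding holds_with_def by simp
  then show ?thesis using holds_circ_psi[OF assms, of "{}" X] by simp
qed

text \<open>Stable models in the sense of Ferraris, Lee and Lifschitz, with intensional predicates Ps.\<close>
definition intensional_stable :: "'c list \<Rightarrow> ('b \<Rightarrow> 'c list \<Rightarrow> bool) \<Rightarrow> ('p,'c,'b) rule list \<Rightarrow>
    'p set \<Rightarrow> ('p \<times> 'c list) set \<Rightarrow> bool" where
  "intensional_stable cs bi Pr Ps M \<longleftrightarrow> reduct_model cs bi Pr M M \<and>
     \<not> (\<exists>N. N \<subset> M \<and> (\<forall>x\<in>M. fst x \<notin> Ps \<longrightarrow> x \<in> N) \<and> reduct_model cs bi Pr M N)"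

definition herbrand_struct :: "'c list \<Rightarrow> ('b \<Rightarrow> 'c list \<Rightarrow> bool) \<Rightarrow> ('d,'c,'p,'b) struct \<Rightarrow> bool" where
  "herbrand_struct cs bi S \<longleftrightarrow> sdom S = cint S ` set cs \<and> inj_on (cint S) (set cs) \<and>
     (\<forall>b as. set as \<subseteq> set cs \<longrightarrow> bint S b (map (cint S) as) = bi b as) \<and>
     (\<forall>p. \<forall>u\<in>pint S p. set u \<subseteq> sdom S)"

lemma circ_witness_imp_smaller_reduct_model:
  assumes S: "herbrand_struct cs bi S" and rules_cs: "\<forall>r\<in>set Pr. rule_consts r \<subseteq> set cs"
    and X: "\<forall>p\<in>Ps. X p \<subseteq> pint S p" "\<exists>p\<in>Ps. X p \<subset> pint S p"
    and holds: "holds_with S X (circ Ps (psi Pr))"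
  defines "M \<equiv> ground_facts cs (cint S) (pint S)"
    and "N \<equiv> ground_facts cs (cint S) (override_on (pint S) X Ps)"
  shows "N \<subset> M \<and> (\<forall>x\<in>M. fst x \<notin> Ps \<longrightarrow> x \<in> N) \<and> reduct_model cs bi Pr M N"
proof (intro conjI)
  have dom: "sdom S = cint S ` set cs"
    and bi: "\<forall>b as. set as \<subseteq> set cs \<longrightarrow> bint S b (map (cint S) as) = bi b as"
    and tuples: "\<forall>p. \<forall>u\<in>pint S p. set u \<subseteq> sdom S"
    using S unfolding herbrand_struct_def by blast+
  show "reduct_model cs bi Pr M N"
    using holds_circ_psi[OF dom bi rules_cs X(1)] holds unfolding M_def N_def by blast
  show "\<forall>x\<in>M. fst x \<notin> Ps \<longrightarrow> x \<in> N"
    by (auto simp: M_def N_def ground_facts_def)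
  obtain p u where p: "p \<in> Ps" "u \<in> pint S p" "u \<notin> X p" using X(2) by blast
  have u: "set u \<subseteq> cint S ` set cs" using tuples p(2) dom by blast
  define t where "t = map (inv_into (set cs) (cint S)) u"
  have t: "set t \<subseteq> set cs" "map (cint S) t = u"
    using u by (auto simp: t_def map_idI f_inv_into_f inv_into_into subset_iff)
  have "(p,t) \<in> M" "(p,t) \<notin> N" using t p by (auto simp: M_def N_def ground_facts_def)
  then show "N \<subset> M" using ground_facts_override_subset[OF X(1)] unfolding M_def N_def by blast
qed

lemma smaller_reduct_model_imp_circ_witness:
  assumes S: "herbrand_struct cs bi S" and rules_cs: "\<forall>r\<in>set Pr. rule_consts r \<subseteq> set cs"
  defines "M \<equiv> ground_facts cs (cint S) (pint S)"
  assumes NM: "N \<subset> M" and agree: "\<forall>x\<in>M. fst x \<notin> Ps \<longrightarrow> x \<in> N"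
    and model: "reduct_model cs bi Pr M M" "reduct_model cs bi Pr M N"
  shows "\<exists>X. (\<forall>p\<in>Ps. X p \<subseteq> pint S p) \<and> (\<exists>p\<in>Ps. X p \<subset> pint S p) \<and>
           holds_with S X (circ Ps (psi Pr))"
proof -
  have dom: "sdom S = cint S ` set cs" and inj: "inj_on (cint S) (set cs)"
    and bi: "\<forall>b as. set as \<subseteq> set cs \<longrightarrow> bint S b (map (cint S) as) = bi b as"
    using S unfolding herbrand_struct_def by blast+
  define X where "X p = {map (cint S) t | t. (p,t) \<in> N}" for p
  have M_cs: "set t \<subseteq> set cs" if "(p,t) \<in> M" for p t using that by (simp add: M_def ground_facts_def)
  have map_eq: "map (cint S) t = map (cint S) t' \<longleftrightarrow> t = t'"
    if "set t \<subseteq> set cs" "set t' \<subseteq> set cs" for t t'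
    using inj that by (intro inj_on_map_eq_map) (auto intro: inj_on_subset)
  have X_N: "map (cint S) t \<in> X p \<longleftrightarrow> (p,t) \<in> N" if t: "set t \<subseteq> set cs" for p t
  proof
    assume "map (cint S) t \<in> X p"
    then obtain t' where t': "map (cint S) t = map (cint S) t'" "(p,t') \<in> N" by (auto simp: X_def)
    then have "set t' \<subseteq> set cs" using M_cs NM by blast
    then have "t = t'" using map_eq[OF t] t'(1) by blast
    then show "(p,t) \<in> N" using t'(2) by simp
  qed (auto simp: X_def)
  have X_sub: "\<forall>p\<in>Ps. X p \<subseteq> pint S p"
    using NM by (auto simp: X_def M_def ground_facts_def)
  have "(p,t) \<in> ground_facts cs (cint S) (override_on (pint S) X Ps) \<longleftrightarrow> (p,t) \<in> N" for p t
  proof (cases "p \<in> Ps")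
    case True
    have "(p,t) \<in> N \<Longrightarrow> set t \<subseteq> set cs" using NM M_cs by blast
    then show ?thesis using True X_N[of t p] by (auto simp: ground_facts_def)
  next
    case False
    have "(p,t) \<in> M \<longleftrightarrow> (p,t) \<in> N" using False agree NM by auto
    then show ?thesis using False by (simp add: ground_facts_def M_def)
  qed
  then have N_eq: "ground_facts cs (cint S) (override_on (pint S) X Ps) = N" by auto
  obtain p t where pt: "(p,t) \<in> M" "(p,t) \<notin> N" using NM by auto
  then have "p \<in> Ps" using agree by (metis fst_conv)
  moreover have "map (cint S) t \<in> pint S p" "map (cint S) t \<notin> X p"
    using pt(1) X_N[OF M_cs[OF pt(1)]] pt(2) by (simp_all add: M_def ground_facts_def)
  ultimately have "\<exists>p\<in>Ps. X p \<subset> pint S p" using X_sub by blast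
  moreover have "holds_with S X (circ Ps (psi Pr))"
    using holds_circ_psi[OF dom bi rules_cs X_sub] model N_eq unfolding M_def by simp
  ultimately show ?thesis using X_sub by blast
qed

lemma so_holds_SOMin_psi_iff:
  assumes S: "herbrand_struct cs bi S" and rules_cs: "\<forall>r\<in>set Pr. rule_consts r \<subseteq> set cs"
  shows "so_holds S (SOMin Ps (psi Pr)) \<longleftrightarrow>
    intensional_stable cs bi Pr Ps (ground_facts cs (cint S) (pint S))"
proof -
  have dom: "sdom S = cint S ` set cs"
    and bi: "\<forall>b as. set as \<subseteq> set cs \<longrightarrow> bint S b (map (cint S) as) = bi b as"
    using S unfolding herbrand_struct_def by blast+
  define M where "M = ground_facts cs (cint S) (pint S)"
  have "(\<exists>X. (\<forall>p\<in>Ps. X p \<subseteq> pint S p) \<and> (\<exists>p\<in>Ps. X p \<subset> pint S p) \<and>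
           holds_with S X (circ Ps (psi Pr))) \<longleftrightarrow>
        (\<exists>N. N \<subset> M \<and> (\<forall>x\<in>M. fst x \<notin> Ps \<longrightarrow> x \<in> N) \<and> reduct_model cs bi Pr M N)"
    if "reduct_model cs bi Pr M M"
  proof
    assume "\<exists>X. (\<forall>p\<in>Ps. X p \<subseteq> pint S p) \<and> (\<exists>p\<in>Ps. X p \<subset> pint S p) \<and>
           holds_with S X (circ Ps (psi Pr))"
    then obtain X where "\<forall>p\<in>Ps. X p \<subseteq> pint S p" "\<exists>p\<in>Ps. X p \<subset> pint S p"
      "holds_with S X (circ Ps (psi Pr))" by blast
    from circ_witness_imp_smaller_reduct_model[OF S rules_cs this]
    show "\<exists>N. N \<subset> M \<and> (\<forall>x\<in>M. fst x \<notin> Ps \<longrightarrow> x \<in> N) \<and> reduct_model cs bi Pr M N"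
      unfolding M_def by blast
  next
    assume "\<exists>N. N \<subset> M \<and> (\<forall>x\<in>M. fst x \<notin> Ps \<longrightarrow> x \<in> N) \<and> reduct_model cs bi Pr M N"
    then obtain N where "N \<subset> M" "\<forall>x\<in>M. fst x \<notin> Ps \<longrightarrow> x \<in> N" "reduct_model cs bi Pr M N"
      by blast
    with smaller_reduct_model_imp_circ_witness[OF S rules_cs] that
    show "\<exists>X. (\<forall>p\<in>Ps. X p \<subseteq> pint S p) \<and> (\<exists>p\<in>Ps. X p \<subset> pint S p) \<and>
           holds_with S X (circ Ps (psi Pr))"
      unfolding M_def by blast
  qed
  then show ?thesis
    unfolding so_holds.simps intensional_stable_def holds_psi[OF dom bi rules_cs] M_def by blast
qed

section \<open>The sentence R(D)\<close>

lemma holds_domain_closure: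
  "holds_with S X (FAll 0 (fdisj (map (\<lambda>c. FEq (V 0) (Cn c)) cs))) \<longleftrightarrow> sdom S \<subseteq> cint S ` set cs"
proof -
  have "holds_with S X (FAll 0 (fdisj (map (\<lambda>c. FEq (V 0) (Cn c)) cs))) \<longleftrightarrow>
      (\<forall>\<sigma>::nat \<Rightarrow> _. range \<sigma> \<subseteq> sdom S \<longrightarrow> \<sigma> 0 \<in> cint S ` set cs)"
    unfolding holds_FAll holds_with_def by auto
  also have "\<dots> \<longleftrightarrow> sdom S \<subseteq> cint S ` set cs"
  proof
    assume all: "\<forall>\<sigma>::nat \<Rightarrow> _. range \<sigma> \<subseteq> sdom S \<longrightarrow> \<sigma> 0 \<in> cint S ` set cs"
    show "sdom S \<subseteq> cint S ` set cs"
    proof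
      fix d assume "d \<in> sdom S"
      then have "range (\<lambda>_::nat. d) \<subseteq> sdom S" by auto
      then show "d \<in> cint S ` set cs" using all by fastforce
    qed
  qed (meson rangeI subsetD)
  finally show ?thesis .
qed

lemma holds_unique_names:
  assumes "sdom S \<noteq> {}"
  shows "holds_with S X (fconj [fneg (FEq (Cn c) (Cn d)). c \<leftarrow> cs, d \<leftarrow> cs, c \<noteq> d]) \<longleftrightarrow>
    inj_on (cint S) (set cs)"
proof -
  obtain d0 where "d0 \<in> sdom S" using assms by blast
  then have "range (\<lambda>_::nat. d0) \<subseteq> sdom S" by auto
  then have "holds_with S X (fconj [fneg (FEq (Cn c) (Cn d)). c \<leftarrow> cs, d \<leftarrow> cs, c \<noteq> d]) \<longleftrightarrow>
      (\<forall>c\<in>set cs. \<forall>d\<in>set cs. c \<noteq> d \<longrightarrow> cint S c \<noteq> cint S d)"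
    unfolding holds_with_def by (auto simp: fneg_def)
  also have "\<dots> \<longleftrightarrow> inj_on (cint S) (set cs)" unfolding inj_on_def by blast
  finally show ?thesis .
qed

lemma eval_fdisj_tuple_eqs:
  "eval S X \<sigma> (fdisj [fconj (map (\<lambda>i. FEq (V i) (Cn (t ! i))) [0..<n]). (Q, t) \<leftarrow> D, Q = P])
   \<longleftrightarrow> (\<exists>t. (P,t) \<in> set D \<and> (\<forall>i<n. \<sigma> i = cint S (t ! i)))"
  by (induction D) (auto split: if_splits)

lemma holds_completion:
  assumes "sdom S \<noteq> {}" and lengths: "\<And>t. (P,t) \<in> set D \<Longrightarrow> length t = ar P"
  shows "holds_with S X (foldr FAll [0..<ar P]
                 (fiff (FAtom (Ext P) (map V [0..<ar P]))
                       (fdisj [fconj (map (\<lambda>i. FEq (V i) (Cn (t ! i))) [0..<ar P]).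
                               (Q, t) \<leftarrow> D, Q = P]))) \<longleftrightarrow>
     (\<forall>u. length u = ar P \<longrightarrow> set u \<subseteq> sdom S \<longrightarrow>
        (u \<in> pint S (Ext P) \<longleftrightarrow> (\<exists>t. (P,t) \<in> set D \<and> u = map (cint S) t)))"
proof -
  obtain d0 where d0: "d0 \<in> sdom S" using assms(1) by blast
  have "holds_with S X (foldr FAll [0..<ar P]
                 (fiff (FAtom (Ext P) (map V [0..<ar P]))
                       (fdisj [fconj (map (\<lambda>i. FEq (V i) (Cn (t ! i))) [0..<ar P]).
                               (Q, t) \<leftarrow> D, Q = P]))) \<longleftrightarrow>
       (\<forall>\<sigma>::nat \<Rightarrow> _. range \<sigma> \<subseteq> sdom S \<longrightarrow> (map \<sigma> [0..<ar P] \<in> pint S (Ext P) \<longleftrightarrow>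
           (\<exists>t. (P,t) \<in> set D \<and> (\<forall>i<ar P. \<sigma> i = cint S (t ! i)))))"
    unfolding holds_foldr_FAll unfolding holds_with_def fiff_def eval.simps eval_fdisj_tuple_eqs
    by (simp add: comp_def iff_conv_conj_imp)
  also have "\<dots> \<longleftrightarrow> (\<forall>\<sigma>::nat \<Rightarrow> _. range \<sigma> \<subseteq> sdom S \<longrightarrow> (map \<sigma> [0..<ar P] \<in> pint S (Ext P) \<longleftrightarrow>
           (\<exists>t. (P,t) \<in> set D \<and> map \<sigma> [0..<ar P] = map (cint S) t)))"
  proof -
    have nth_iff: "(\<forall>i<ar P. \<sigma> i = cint S (t ! i)) \<longleftrightarrow> map \<sigma> [0..<ar P] = map (cint S) t"
      if "length t = ar P" for t and \<sigma> :: "nat \<Rightarrow> _"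
      using that by (auto simp: list_eq_iff_nth_eq)
    have "(\<exists>t. (P,t) \<in> set D \<and> (\<forall>i<ar P. \<sigma> i = cint S (t ! i))) \<longleftrightarrow>
          (\<exists>t. (P,t) \<in> set D \<and> map \<sigma> [0..<ar P] = map (cint S) t)" for \<sigma> :: "nat \<Rightarrow> _"
      using nth_iff lengths by blast
    then show ?thesis by simp
  qed
  also have "\<dots> \<longleftrightarrow> (\<forall>u. length u = ar P \<longrightarrow> set u \<subseteq> sdom S \<longrightarrow>
      (u \<in> pint S (Ext P) \<longleftrightarrow> (\<exists>t. (P,t) \<in> set D \<and> u = map (cint S) t)))"
    by (rule all_valuations_tuple_iff[OF d0])
  finally show ?thesis .
qed

lemma holds_RD:
  assumes "sdom S \<noteq> {}" and "wf_db Sch ar cs D"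
  shows "holds_with S X (RD Sch ar cs D) \<longleftrightarrow>
    sdom S \<subseteq> cint S ` set cs \<and> inj_on (cint S) (set cs) \<and>
    (\<forall>P\<in>set Sch. \<forall>u. length u = ar P \<longrightarrow> set u \<subseteq> sdom S \<longrightarrow>
        (u \<in> pint S (Ext P) \<longleftrightarrow> (\<exists>t. (P,t) \<in> set D \<and> u = map (cint S) t)))"
proof -
  have lengths: "(P,t) \<in> set D \<Longrightarrow> length t = ar P" for P t
    using assms(2) unfolding wf_db_def by fastforce
  have completion: "(\<forall>P\<in>set Sch. holds_with S X (foldr FAll [0..<ar P]
                 (fiff (FAtom (Ext P) (map V [0..<ar P]))
                       (fdisj [fconj (map (\<lambda>i. FEq (V i) (Cn (t ! i))) [0..<ar P]).
                               (Q, t) \<leftarrow> D, Q = P])))) \<longleftrightarrow>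
    (\<forall>P\<in>set Sch. \<forall>u. length u = ar P \<longrightarrow> set u \<subseteq> sdom S \<longrightarrow>
        (u \<in> pint S (Ext P) \<longleftrightarrow> (\<exists>t. (P,t) \<in> set D \<and> u = map (cint S) t)))"
    by (simp add: holds_completion[OF assms(1)] lengths)
  have split: "(\<forall>g\<in>set ([A, B] @ map F L). Q g) \<longleftrightarrow> Q A \<and> Q B \<and> (\<forall>x\<in>set L. Q (F x))"
    for A B F L and Q :: "_ \<Rightarrow> bool" by auto
  show ?thesis
    unfolding RD_def holds_fconj split holds_domain_closure
      holds_unique_names[OF assms(1), unfolded holds_fconj] completion ..
qed

lemma so_holds_FO_atom:
  assumes "sdom S \<noteq> {}"
  shows "so_holds S (FO (FAtom p (map Cn a))) \<longleftrightarrow> map (cint S) a \<in> pint S p"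
proof -
  obtain d where "d \<in> sdom S" using assms by blast
  then have "range (\<lambda>_::nat. d) \<subseteq> sdom S" by auto
  then show ?thesis unfolding so_holds.simps holds_with_def by (auto simp: comp_def)
qed

lemma ground_facts_wf:
  "wf_struct arity cs bi S \<Longrightarrow> (p,t) \<in> ground_facts cs (cint S) (pint S) \<Longrightarrow>
    length t = arity p \<and> set t \<subseteq> set cs"
  unfolding wf_struct_def ground_facts_def by force

lemma wf_struct_RD:
  assumes wf: "wf_struct (pn_arity ar arq) cs bi S" and RD: "holds_with S X (RD Sch ar cs D)"
    and D: "wf_db Sch ar cs D"
  shows "herbrand_struct cs bi S"
    and "P \<in> set Sch \<Longrightarrow> (Ext P,t) \<in> ground_facts cs (cint S) (pint S) \<longleftrightarrow> (P,t) \<in> set D"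
proof -
  have ne: "sdom S \<noteq> {}" and names: "\<forall>c\<in>set cs. cint S c \<in> sdom S"
    and tuples: "\<forall>p. \<forall>u\<in>pint S p. length u = pn_arity ar arq p \<and> set u \<subseteq> sdom S"
    using wf unfolding wf_struct_def by blast+
  have dom: "sdom S \<subseteq> cint S ` set cs" and inj: "inj_on (cint S) (set cs)"
    and completion: "\<forall>P\<in>set Sch. \<forall>u. length u = ar P \<longrightarrow> set u \<subseteq> sdom S \<longrightarrow>
        (u \<in> pint S (Ext P) \<longleftrightarrow> (\<exists>t. (P,t) \<in> set D \<and> u = map (cint S) t))"
    using holds_RD[OF ne D] RD by blast+
  show "herbrand_struct cs bi S"
    using wf dom names inj unfolding herbrand_struct_def wf_struct_def by blast
  assume P: "P \<in> set Sch"
  have D_wf: "length t' = ar P \<and> set t' \<subseteq> set cs" if "(P,t') \<in> set D" for t'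
    using D that unfolding wf_db_def by fastforce
  have map_eq: "map (cint S) t = map (cint S) t' \<longleftrightarrow> t = t'"
    if "set t \<subseteq> set cs" "set t' \<subseteq> set cs" for t t'
    using inj that by (intro inj_on_map_eq_map) (auto intro: inj_on_subset)
  show "(Ext P,t) \<in> ground_facts cs (cint S) (pint S) \<longleftrightarrow> (P,t) \<in> set D"
  proof
    assume "(Ext P,t) \<in> ground_facts cs (cint S) (pint S)"
    then have t: "set t \<subseteq> set cs" "map (cint S) t \<in> pint S (Ext P)" by (auto simp: ground_facts_def)
    then have "length (map (cint S) t) = ar P" "set (map (cint S) t) \<subseteq> sdom S"
      using tuples by fastforce+
    then obtain t' where t': "(P,t') \<in> set D" "map (cint S) t = map (cint S) t'"
      using completion P t(2) by blast
    then have "t = t'" using map_eq t(1) D_wf by blast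
    then show "(P,t) \<in> set D" using t'(1) by simp
  next
    assume Pt: "(P,t) \<in> set D"
    then have "length (map (cint S) t) = ar P" "set (map (cint S) t) \<subseteq> sdom S"
      using D_wf names by auto
    then have "map (cint S) t \<in> pint S (Ext P)" using completion P Pt by blast
    then show "(Ext P,t) \<in> ground_facts cs (cint S) (pint S)"
      using D_wf[OF Pt] by (simp add: ground_facts_def)
  qed
qed

definition herbrand_interp :: "'c list \<Rightarrow> ('b \<Rightarrow> 'c list \<Rightarrow> bool) \<Rightarrow> ('p \<times> 'c list) set \<Rightarrow>
    ('c,'c,'p,'b) struct" where
  "herbrand_interp cs bi M = \<lparr>sdom = set cs, cint = id, pint = (\<lambda>p. {t. (p,t) \<in> M}), bint = bi\<rparr>"

lemma herbrand_interp_wf: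
  assumes "cs \<noteq> []" and M: "\<And>p t. (p,t) \<in> M \<Longrightarrow> length t = arity p \<and> set t \<subseteq> set cs"
  shows "wf_struct arity cs bi (herbrand_interp cs bi M)"
    and "herbrand_struct cs bi (herbrand_interp cs bi M)"
    and "ground_facts cs (cint (herbrand_interp cs bi M)) (pint (herbrand_interp cs bi M)) = M"
  using assms by (auto simp: herbrand_interp_def wf_struct_def herbrand_struct_def ground_facts_def
    dest: M)

lemma holds_RD_herbrand_interp:
  assumes "cs \<noteq> []" and D: "wf_db Sch ar cs D"
    and ext: "\<forall>P\<in>set Sch. \<forall>t. (Ext P,t) \<in> M \<longleftrightarrow> (P,t) \<in> set D"
    and M: "\<And>p t. (p,t) \<in> M \<Longrightarrow> set t \<subseteq> set cs"
  shows "holds_with (herbrand_interp cs bi M) X (RD Sch ar cs D)"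
proof -
  have "(P,t) \<in> set D \<Longrightarrow> set t \<subseteq> set cs" for P t using D unfolding wf_db_def by blast
  then show ?thesis
    using holds_RD[of "herbrand_interp cs bi M", OF _ D] assms(1) ext M
    by (force simp: herbrand_interp_def)
qed

section \<open>The reduct of the repair program\<close>

definition ground_args :: "(nat \<Rightarrow> 'c) \<Rightarrow> ('p,'c) atom \<Rightarrow> 'c list" where
  "ground_args \<sigma> a = map (tev id \<sigma>) (snd a)"

lemma gatom_mapp [simp]: "gatom \<sigma> (mapp g a) = (g (fst a), ground_args \<sigma> a)"
  by (simp add: gatom_def mapp_def ground_args_def)

lemma gatom_vars: "gatom \<sigma> (p, map V [0..<n]) = (p, map \<sigma> [0..<n])"
  by (simp add: gatom_def)

definition schema_rules_hold :: "'c list \<Rightarrow> ('r \<Rightarrow> nat) \<Rightarrow> 'r \<Rightarrow>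
    (('r,'q) pn \<times> 'c list) set \<Rightarrow> (('r,'q) pn \<times> 'c list) set \<Rightarrow> bool" where
  "schema_rules_hold cs ar P M N \<longleftrightarrow> (\<forall>t. length t = ar P \<longrightarrow> set t \<subseteq> set cs \<longrightarrow>
     ((Ext P,t) \<in> N \<longrightarrow> (St P,t) \<in> N) \<and> ((Tr P,t) \<in> N \<longrightarrow> (St P,t) \<in> N) \<and>
     ((St P,t) \<in> N \<longrightarrow> (Fa P,t) \<notin> M \<longrightarrow> (SS P,t) \<in> N) \<and> \<not> ((Tr P,t) \<in> N \<and> (Fa P,t) \<in> N))"

fun ic_rules_hold :: "'c list \<Rightarrow> ('b \<Rightarrow> 'c list \<Rightarrow> bool) \<Rightarrow> ('r,'c,'b) ic \<Rightarrow>
    (('r,'q) pn \<times> 'c list) set \<Rightarrow> (('r,'q) pn \<times> 'c list) set \<Rightarrow> bool" where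
  "ic_rules_hold cs bi (IC B H ph) M N \<longleftrightarrow>
    (\<forall>J\<in>set (subseqs [0..<length H]). \<forall>\<sigma>. range \<sigma> \<subseteq> set cs \<longrightarrow>
      (\<forall>a\<in>set B. (St (fst a), ground_args \<sigma> a) \<in> N) \<longrightarrow>
      (\<forall>j\<in>set J. (Fa (fst (H ! j)), ground_args \<sigma> (H ! j)) \<in> N) \<longrightarrow>
      (\<forall>k<length H. k \<notin> set J \<longrightarrow> (Ext (fst (H ! k)), ground_args \<sigma> (H ! k)) \<notin> M) \<longrightarrow>
      \<not> (\<exists>(pl,b,ts)\<in>set ph. bi b (map (tev id \<sigma>) ts) = pl) \<longrightarrow>
      (\<exists>a\<in>set B. (Fa (fst a), ground_args \<sigma> a) \<in> N) \<or> (\<exists>a\<in>set H. (Tr (fst a), ground_args \<sigma> a) \<in> N))"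

lemma schema_rules_sat_iff:
  assumes "cs \<noteq> []"
  shows "(\<forall>r\<in>set (schema_rules ar P). \<forall>\<sigma>. range \<sigma> \<subseteq> set cs \<longrightarrow> rule_sat bi r M N \<sigma>) \<longleftrightarrow>
         schema_rules_hold cs ar P M N"
proof -
  obtain c where c: "c \<in> set cs" using assms by (cases cs) auto
  let ?\<Psi> = "\<lambda>t. ((Ext P,t) \<in> N \<longrightarrow> (St P,t) \<in> N) \<and> ((Tr P,t) \<in> N \<longrightarrow> (St P,t) \<in> N) \<and>
     ((St P,t) \<in> N \<longrightarrow> (Fa P,t) \<notin> M \<longrightarrow> (SS P,t) \<in> N) \<and> \<not> ((Tr P,t) \<in> N \<and> (Fa P,t) \<in> N)"
  have "(\<forall>r\<in>set (schema_rules ar P). \<forall>\<sigma>. range \<sigma> \<subseteq> set cs \<longrightarrow> rule_sat bi r M N \<sigma>) \<longleftrightarrow>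
    (\<forall>\<sigma>::nat \<Rightarrow> _. range \<sigma> \<subseteq> set cs \<longrightarrow> ?\<Psi> (map \<sigma> [0..<ar P]))"
    unfolding schema_rules_def Let_def rule_sat_def by (auto simp: gatom_vars bis_true_def)
  also have "\<dots> \<longleftrightarrow> schema_rules_hold cs ar P M N"
    unfolding schema_rules_hold_def using all_valuations_tuple_iff[OF c, where \<Psi> = ?\<Psi>] by simp
  finally show ?thesis .
qed

lemma ic_rules_sat_iff:
  "(\<forall>r\<in>set (ic_rules ic). \<forall>\<sigma>. range \<sigma> \<subseteq> set cs \<longrightarrow> rule_sat bi r M N \<sigma>) \<longleftrightarrow>
   ic_rules_hold cs bi ic M N"
proof (cases ic)
  case (IC B H ph)
  have builtins: "bis_true bi \<sigma> (map (\<lambda>(pl,b,ts). (\<not> pl, b, ts)) ph) \<longleftrightarrow>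
     \<not> (\<exists>(pl,b,ts)\<in>set ph. bi b (map (tev id \<sigma>) ts) = pl)" for \<sigma>
    unfolding bis_true_def by auto
  have neg: "(\<forall>a\<in>set (map (\<lambda>k. mapp Ext (H ! k)) (filter (\<lambda>k. k \<notin> set J) [0..<length H])).
        gatom \<sigma> a \<notin> M) \<longleftrightarrow>
      (\<forall>k<length H. k \<notin> set J \<longrightarrow> (Ext (fst (H ! k)), ground_args \<sigma> (H ! k)) \<notin> M)" for \<sigma> J
    by auto
  have each_rule: "rule_sat bi (Rule (map (mapp Fa) B @ map (mapp Tr) H)
                   (map (mapp St) B @ map (\<lambda>j. mapp Fa (H ! j)) J)
                   (map (\<lambda>k. mapp Ext (H ! k)) (filter (\<lambda>k. k \<notin> set J) [0..<length H]))
                   (map (\<lambda>(pl,b,ts). (\<not> pl, b, ts)) ph)) M N \<sigma> \<longleftrightarrow>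
      ((\<forall>a\<in>set B. (St (fst a), ground_args \<sigma> a) \<in> N) \<longrightarrow>
      (\<forall>j\<in>set J. (Fa (fst (H ! j)), ground_args \<sigma> (H ! j)) \<in> N) \<longrightarrow>
      (\<forall>k<length H. k \<notin> set J \<longrightarrow> (Ext (fst (H ! k)), ground_args \<sigma> (H ! k)) \<notin> M) \<longrightarrow>
      \<not> (\<exists>(pl,b,ts)\<in>set ph. bi b (map (tev id \<sigma>) ts) = pl) \<longrightarrow>
      (\<exists>a\<in>set B. (Fa (fst a), ground_args \<sigma> a) \<in> N) \<or> (\<exists>a\<in>set H. (Tr (fst a), ground_args \<sigma> a) \<in> N))"
    for J \<sigma>
    unfolding rule_sat_def rule.sel builtins neg set_append ball_Un bex_Un set_map
      Ball_image_comp bex_simps gatom_mapp comp_def by auto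
  show ?thesis
    unfolding IC ic_rules.simps ic_rules_hold.simps set_map Ball_image_comp comp_def each_rule ..
qed

lemma reduct_model_repair_prog_iff:
  assumes "cs \<noteq> []"
  shows "reduct_model cs bi (repair_prog Sch ar ics) M N \<longleftrightarrow>
    (\<forall>ic\<in>set ics. ic_rules_hold cs bi ic M N) \<and> (\<forall>P\<in>set Sch. schema_rules_hold cs ar P M N)"
proof -
  have "reduct_model cs bi (repair_prog Sch ar ics) M N \<longleftrightarrow>
    (\<forall>ic\<in>set ics. \<forall>r\<in>set (ic_rules ic). \<forall>\<sigma>. range \<sigma> \<subseteq> set cs \<longrightarrow> rule_sat bi r M N \<sigma>) \<and>
    (\<forall>P\<in>set Sch. \<forall>r\<in>set (schema_rules ar P). \<forall>\<sigma>. range \<sigma> \<subseteq> set cs \<longrightarrow> rule_sat bi r M N \<sigma>)"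
    unfolding reduct_model_iff_rule_sat repair_prog_def by auto
  then show ?thesis using ic_rules_sat_iff[of _ cs bi M N] schema_rules_sat_iff[OF assms, of ar _ bi M N]
    by simp
qed

lemma filter_in_subseqs: "filter P xs \<in> set (subseqs xs)"
  by (induction xs) (auto simp: Let_def)

text \<open>The rule instance used is the one whose P_f premises are the head atoms in I and whose
  not P premises are the others.\<close>
lemma ic_rules_holdD:
  assumes rules: "ic_rules_hold cs bi (IC B H ph) M N" and \<sigma>: "range \<sigma> \<subseteq> set cs"
    and body_St: "\<forall>a\<in>set B. (St (fst a), ground_args \<sigma> a) \<in> N"
    and head_Fa: "\<forall>j<length H. (fst (H ! j), ground_args \<sigma> (H ! j)) \<in> I \<longrightarrow>
      (Fa (fst (H ! j)), ground_args \<sigma> (H ! j)) \<in> N"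
    and head_Ext: "\<forall>k<length H. (fst (H ! k), ground_args \<sigma> (H ! k)) \<notin> I \<longrightarrow>
      (Ext (fst (H ! k)), ground_args \<sigma> (H ! k)) \<notin> M"
    and builtins: "\<not> (\<exists>(pl,b,ts)\<in>set ph. bi b (map (tev id \<sigma>) ts) = pl)"
  shows "(\<exists>a\<in>set B. (Fa (fst a), ground_args \<sigma> a) \<in> N) \<or> (\<exists>a\<in>set H. (Tr (fst a), ground_args \<sigma> a) \<in> N)"
proof -
  define J where "J = filter (\<lambda>j. (fst (H ! j), ground_args \<sigma> (H ! j)) \<in> I) [0..<length H]"
  have "J \<in> set (subseqs [0..<length H])" unfolding J_def by (rule filter_in_subseqs)
  moreover have "\<forall>j\<in>set J. (Fa (fst (H ! j)), ground_args \<sigma> (H ! j)) \<in> N" using head_Fa by (simp add: J_def)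
  moreover have "\<forall>k<length H. k \<notin> set J \<longrightarrow> (Ext (fst (H ! k)), ground_args \<sigma> (H ! k)) \<notin> M"
    using head_Ext by (simp add: J_def)
  ultimately show ?thesis using rules \<sigma> body_St builtins unfolding ic_rules_hold.simps by blast
qed

lemma repair_prog_consts:
  assumes ics_wf: "\<forall>ic\<in>set ics. wf_ic Sch ar cs ic"
  shows "\<forall>r\<in>set (repair_prog Sch ar ics). rule_consts r \<subseteq> set cs"
proof
  fix r assume "r \<in> set (repair_prog Sch ar ics)"
  then consider (ic) ic where "ic \<in> set ics" "r \<in> set (ic_rules ic)"
    | (schema) P where "r \<in> set (schema_rules ar P)"
    unfolding repair_prog_def by auto
  then show "rule_consts r \<subseteq> set cs"
  proof cases
    case ic
    obtain B H ph where ic_def: "ic = IC B H ph" by (cases ic)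
    have "wf_ic Sch ar cs (IC B H ph)" using ics_wf ic(1) unfolding ic_def by blast
    then have wf: "\<forall>a\<in>set B \<union> set H. atom_consts a \<subseteq> set cs" "\<forall>l\<in>set ph. blit_consts l \<subseteq> set cs"
      by auto
    obtain J where J: "J \<in> set (subseqs [0..<length H])" and r_def:
      "r = Rule (map (mapp Fa) B @ map (mapp Tr) H)
                (map (mapp St) B @ map (\<lambda>j. mapp Fa (H ! j)) J)
                (map (\<lambda>k. mapp Ext (H ! k)) (filter (\<lambda>k. k \<notin> set J) [0..<length H]))
                (map (\<lambda>(pl,b,ts). (\<not> pl, b, ts)) ph)"
      using ic(2) unfolding ic_def by auto
    have "set J \<in> set ` set (subseqs [0..<length H])" using J by blast
    then have "\<forall>j\<in>set J. j < length H" unfolding subseqs_powset by auto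
    then show ?thesis using wf unfolding r_def rule_consts_def rule_atoms_def
      by (force simp: blit_consts_def atom_consts_def mapp_def)
  next
    case schema
    have no_consts: "atom_consts (p, map V xs) = {}" for p :: "('r,'q) pn" and xs :: "nat list"
      by (auto simp: atom_consts_def)
    show ?thesis
      using schema by (auto simp: no_consts schema_rules_def Let_def rule_consts_def rule_atoms_def)
  qed
qed

section \<open>Repairs as annotations\<close>

lemma repair_preds_simps [simp]:
  "Ext P \<notin> repair_preds Sch" "Qp q \<notin> repair_preds Sch"
  "Tr P \<in> repair_preds Sch \<longleftrightarrow> P \<in> set Sch" "Fa P \<in> repair_preds Sch \<longleftrightarrow> P \<in> set Sch"
  "St P \<in> repair_preds Sch \<longleftrightarrow> P \<in> set Sch" "SS P \<in> repair_preds Sch \<longleftrightarrow> P \<in> set Sch"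
  by (auto simp: repair_preds_def)

text \<open>The SS atoms are those derived by the reduct of P_starstar <- P_star, not P_f with respect
  to M, not simply D': this is what makes the annotation of a better repair a model of the same
  reduct.\<close>
definition annotation :: "'r list \<Rightarrow> ('r \<times> 'c list) set \<Rightarrow> ('r \<times> 'c list) set \<Rightarrow>
    (('r,'q) pn \<times> 'c list) set \<Rightarrow> (('r,'q) pn \<times> 'c list) set" where
  "annotation Sch D0 D' M = {x\<in>M. fst x \<notin> repair_preds Sch} \<union>
     {(Tr P,t) |P t. P \<in> set Sch \<and> (P,t) \<in> D' - D0} \<union>
     {(Fa P,t) |P t. P \<in> set Sch \<and> (P,t) \<in> D0 - D'} \<union>
     {(St P,t) |P t. P \<in> set Sch \<and> (P,t) \<in> D0 \<union> D'} \<union>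
     {(SS P,t) |P t. P \<in> set Sch \<and> (P,t) \<in> D0 \<union> D' \<and> (Fa P,t) \<notin> M}"

definition annotated_instance :: "'r list \<Rightarrow> ('r \<times> 'c list) set \<Rightarrow>
    (('r,'q) pn \<times> 'c list) set \<Rightarrow> ('r \<times> 'c list) set" where
  "annotated_instance Sch D0 N =
     {(P,t). P \<in> set Sch \<and> ((P,t) \<in> D0 \<or> (Tr P,t) \<in> N) \<and> (Fa P,t) \<notin> N}"

lemma mem_annotation [simp]:
  "(Ext P,t) \<in> annotation Sch D0 D' M \<longleftrightarrow> (Ext P,t) \<in> M"
  "(Qp q,t) \<in> annotation Sch D0 D' M \<longleftrightarrow> (Qp q,t) \<in> M"
  "(Tr P,t) \<in> annotation Sch D0 D' M \<longleftrightarrow>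
     (if P \<in> set Sch then (P,t) \<in> D' \<and> (P,t) \<notin> D0 else (Tr P,t) \<in> M)"
  "(Fa P,t) \<in> annotation Sch D0 D' M \<longleftrightarrow>
     (if P \<in> set Sch then (P,t) \<in> D0 \<and> (P,t) \<notin> D' else (Fa P,t) \<in> M)"
  "(St P,t) \<in> annotation Sch D0 D' M \<longleftrightarrow>
     (if P \<in> set Sch then (P,t) \<in> D0 \<or> (P,t) \<in> D' else (St P,t) \<in> M)"
  "(SS P,t) \<in> annotation Sch D0 D' M \<longleftrightarrow>
     (if P \<in> set Sch then ((P,t) \<in> D0 \<or> (P,t) \<in> D') \<and> (Fa P,t) \<notin> M else (SS P,t) \<in> M)"
  by (auto simp: annotation_def)

lemma annotation_agrees: "x \<in> M \<Longrightarrow> fst x \<notin> repair_preds Sch \<Longrightarrow> x \<in> annotation Sch D0 D' M"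
  by (simp add: annotation_def)

lemma annotation_fixpoint_SS:
  assumes "annotation Sch D0 D' M = M" "P \<in> set Sch"
  shows "(SS P,t) \<in> M \<longleftrightarrow> (P,t) \<in> D'"
proof -
  have "(Fa P,t) \<in> M \<longleftrightarrow> (P,t) \<in> D0 \<and> (P,t) \<notin> D'"
    using mem_annotation(4)[of P t Sch D0 D' M] assms by simp
  then show ?thesis using mem_annotation(6)[of P t Sch D0 D' M] assms by auto
qed

lemma annotation_idem:
  assumes "\<forall>P\<in>set Sch. \<forall>t. (Fa P,t) \<in> M \<longleftrightarrow> (P,t) \<in> D0 \<and> (P,t) \<notin> D'"
  shows "annotation Sch D0 D' (annotation Sch D0 D' M) = annotation Sch D0 D' M"
  using assms unfolding annotation_def by (auto simp: repair_preds_def)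

lemma annotation_subset_iff:
  assumes "\<forall>(P,t)\<in>D0. P \<in> set Sch" "\<forall>(P,t)\<in>D. P \<in> set Sch"
  shows "annotation Sch D0 D M \<subseteq> annotation Sch D0 E M \<longleftrightarrow> symdiff D0 D \<subseteq> symdiff D0 E"
proof
  assume sub: "annotation Sch D0 D M \<subseteq> annotation Sch D0 E M"
  show "symdiff D0 D \<subseteq> symdiff D0 E"
  proof
    fix x assume x: "x \<in> symdiff D0 D"
    obtain P t where x_def: "x = (P,t)" by force
    have "P \<in> set Sch" using assms x x_def by (auto simp: symdiff_def)
    then have "(Tr P,t) \<in> annotation Sch D0 D M \<longrightarrow> (Tr P,t) \<in> annotation Sch D0 E M"
      "(Fa P,t) \<in> annotation Sch D0 D M \<longrightarrow> (Fa P,t) \<in> annotation Sch D0 E M"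
      using sub by blast+
    then show "x \<in> symdiff D0 E"
      using x \<open>P \<in> set Sch\<close> unfolding x_def by (auto simp: symdiff_def)
  qed
next
  assume "symdiff D0 D \<subseteq> symdiff D0 E"
  then show "annotation Sch D0 D M \<subseteq> annotation Sch D0 E M"
    unfolding annotation_def symdiff_def by blast
qed

lemma annotation_psubset_iff:
  assumes "\<forall>(P,t)\<in>D0. P \<in> set Sch" "\<forall>(P,t)\<in>D. P \<in> set Sch" "\<forall>(P,t)\<in>E. P \<in> set Sch"
  shows "annotation Sch D0 D M \<subset> annotation Sch D0 E M \<longleftrightarrow> symdiff D0 D \<subset> symdiff D0 E"
  using annotation_subset_iff[OF assms(1,2), where E = E and M = M]
    annotation_subset_iff[OF assms(1,3), where E = D and M = M]
  by (simp add: less_le_not_le)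

lemma instance_over_rel_names: "instance_over Sch ar cs D \<Longrightarrow> \<forall>(P,t)\<in>D. P \<in> set Sch"
  unfolding instance_over_def by blast

lemma ground_args_wf:
  assumes "wf_ic Sch ar cs (IC B H ph)" "a \<in> set B \<union> set H" "range \<sigma> \<subseteq> set cs"
  shows "fst a \<in> set Sch" "length (ground_args \<sigma> a) = ar (fst a)" "set (ground_args \<sigma> a) \<subseteq> set cs"
proof -
  have a: "fst a \<in> set Sch" "length (snd a) = ar (fst a)" "atom_consts a \<subseteq> set cs"
    using assms(1,2) by auto
  then show "fst a \<in> set Sch" "length (ground_args \<sigma> a) = ar (fst a)"
    by (simp_all add: ground_args_def)
  show "set (ground_args \<sigma> a) \<subseteq> set cs"
    using gatom_in[OF assms(3) a(3)] by (simp add: ground_args_def gatom_def)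
qed

lemma ic_sat_iff:
  "ic_sat cs bi I (IC B H ph) \<longleftrightarrow>
     (\<forall>\<sigma>. range \<sigma> \<subseteq> set cs \<longrightarrow> (\<forall>a\<in>set B. (fst a, ground_args \<sigma> a) \<in> I) \<longrightarrow>
        (\<exists>a\<in>set H. (fst a, ground_args \<sigma> a) \<in> I) \<or>
        (\<exists>(pl,b,ts)\<in>set ph. bi b (map (tev id \<sigma>) ts) = pl))"
  by (simp add: ground_args_def case_prod_beta')

lemma ic_rules_hold_annotation:
  assumes wf: "wf_ic Sch ar cs ic" and sat: "ic_sat cs bi D' ic"
    and ext: "\<forall>P\<in>set Sch. \<forall>t. (Ext P,t) \<in> M \<longleftrightarrow> (P,t) \<in> D0"
  shows "ic_rules_hold cs bi ic M (annotation Sch D0 D' M)"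
proof -
  obtain B H ph where ic: "ic = IC B H ph" by (cases ic)
  note in_Sch = ground_args_wf(1)[OF wf[unfolded ic]]
  show ?thesis unfolding ic ic_rules_hold.simps
  proof (intro ballI allI impI)
    fix J \<sigma> assume \<sigma>: "range \<sigma> \<subseteq> set cs"
      and body: "\<forall>a\<in>set B. (St (fst a), ground_args \<sigma> a) \<in> annotation Sch D0 D' M"
      and J: "\<forall>j\<in>set J. (Fa (fst (H ! j)), ground_args \<sigma> (H ! j)) \<in> annotation Sch D0 D' M"
      and not_J: "\<forall>k<length H. k \<notin> set J \<longrightarrow> (Ext (fst (H ! k)), ground_args \<sigma> (H ! k)) \<notin> M"
      and builtins: "\<not> (\<exists>(pl,b,ts)\<in>set ph. bi b (map (tev id \<sigma>) ts) = pl)"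
    have "(\<exists>a\<in>set B. (fst a, ground_args \<sigma> a) \<notin> D') \<or> (\<exists>a\<in>set H. (fst a, ground_args \<sigma> a) \<in> D')"
      using sat \<sigma> builtins unfolding ic ic_sat_iff by blast
    then show "(\<exists>a\<in>set B. (Fa (fst a), ground_args \<sigma> a) \<in> annotation Sch D0 D' M) \<or>
      (\<exists>a\<in>set H. (Tr (fst a), ground_args \<sigma> a) \<in> annotation Sch D0 D' M)"
    proof
      assume "\<exists>a\<in>set B. (fst a, ground_args \<sigma> a) \<notin> D'"
      then obtain a where a: "a \<in> set B" "(fst a, ground_args \<sigma> a) \<notin> D'" by blast
      have P: "fst a \<in> set Sch" using in_Sch[OF _ \<sigma>] a(1) by blast
      have "(St (fst a), ground_args \<sigma> a) \<in> annotation Sch D0 D' M" using body a(1) by blast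
      then have "(Fa (fst a), ground_args \<sigma> a) \<in> annotation Sch D0 D' M" using P a(2) by simp
      then show ?thesis using a(1) by blast
    next
      assume "\<exists>a\<in>set H. (fst a, ground_args \<sigma> a) \<in> D'"
      then obtain j where j: "j < length H" "(fst (H ! j), ground_args \<sigma> (H ! j)) \<in> D'"
        by (metis in_set_conv_nth)
      have P: "fst (H ! j) \<in> set Sch" using in_Sch[OF _ \<sigma>] j(1) by simp
      have "(fst (H ! j), ground_args \<sigma> (H ! j)) \<notin> D0"
      proof (cases "j \<in> set J")
        case True
        then have "(Fa (fst (H ! j)), ground_args \<sigma> (H ! j)) \<in> annotation Sch D0 D' M" using J by blast
        then show ?thesis using j(2) P by simp
      next
        case False
        then show ?thesis using not_J j(1) ext P by blast
      qed
      then have "(Tr (fst (H ! j)), ground_args \<sigma> (H ! j)) \<in> annotation Sch D0 D' M" using j(2) P by simp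
      then show ?thesis using nth_mem[OF j(1)] by blast
    qed
  qed
qed

lemma ic_sat_annotated_instance:
  assumes wf: "wf_ic Sch ar cs ic" and rules: "ic_rules_hold cs bi ic M N"
    and ext: "\<forall>P\<in>set Sch. \<forall>t. (Ext P,t) \<in> M \<longleftrightarrow> (P,t) \<in> D0"
    and St_closed: "\<And>P t. P \<in> set Sch \<Longrightarrow> (P,t) \<in> D0 \<or> (Tr P,t) \<in> N \<Longrightarrow> (St P,t) \<in> N"
    and Tr_Fa: "\<And>P t. P \<in> set Sch \<Longrightarrow> (Tr P,t) \<in> N \<Longrightarrow> (Fa P,t) \<notin> N"
  shows "ic_sat cs bi (annotated_instance Sch D0 N) ic"
proof -
  obtain B H ph where ic: "ic = IC B H ph" by (cases ic)
  note in_Sch = ground_args_wf(1)[OF wf[unfolded ic]]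
  let ?D = "annotated_instance Sch D0 N"
  show ?thesis unfolding ic ic_sat_iff
  proof (intro allI impI)
    fix \<sigma> assume \<sigma>: "range \<sigma> \<subseteq> set cs" and body: "\<forall>a\<in>set B. (fst a, ground_args \<sigma> a) \<in> ?D"
    show "(\<exists>a\<in>set H. (fst a, ground_args \<sigma> a) \<in> ?D) \<or>
      (\<exists>(pl,b,ts)\<in>set ph. bi b (map (tev id \<sigma>) ts) = pl)"
    proof (rule ccontr)
      assume contra: "\<not> ?thesis"
      have body_St: "\<forall>a\<in>set B. (St (fst a), ground_args \<sigma> a) \<in> N"
      proof
        fix a assume a: "a \<in> set B"
        then have "(fst a, ground_args \<sigma> a) \<in> ?D" using body by blast
        then show "(St (fst a), ground_args \<sigma> a) \<in> N"
          using St_closed in_Sch[OF _ \<sigma>, of a] a unfolding annotated_instance_def by blast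
      qed
      have head_Fa: "\<forall>j<length H. (fst (H ! j), ground_args \<sigma> (H ! j)) \<in> D0 \<longrightarrow>
          (Fa (fst (H ! j)), ground_args \<sigma> (H ! j)) \<in> N"
      proof (intro allI impI)
        fix j assume j: "j < length H" "(fst (H ! j), ground_args \<sigma> (H ! j)) \<in> D0"
        then have "(fst (H ! j), ground_args \<sigma> (H ! j)) \<notin> ?D" using contra by (meson nth_mem)
        moreover have "fst (H ! j) \<in> set Sch" using in_Sch[OF _ \<sigma>] j(1) by simp
        ultimately show "(Fa (fst (H ! j)), ground_args \<sigma> (H ! j)) \<in> N"
          using j(2) by (simp add: annotated_instance_def)
      qed
      have "\<forall>k<length H. (fst (H ! k), ground_args \<sigma> (H ! k)) \<notin> D0 \<longrightarrow>
          (Ext (fst (H ! k)), ground_args \<sigma> (H ! k)) \<notin> M"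
        using ext in_Sch[OF _ \<sigma>] by simp
      moreover have "\<not> (\<exists>(pl,b,ts)\<in>set ph. bi b (map (tev id \<sigma>) ts) = pl)" using contra by blast
      ultimately have "(\<exists>a\<in>set B. (Fa (fst a), ground_args \<sigma> a) \<in> N) \<or>
          (\<exists>a\<in>set H. (Tr (fst a), ground_args \<sigma> a) \<in> N)"
        using ic_rules_holdD[OF rules[unfolded ic] \<sigma> body_St head_Fa] by blast
      then show False
      proof
        assume "\<exists>a\<in>set B. (Fa (fst a), ground_args \<sigma> a) \<in> N"
        then show False using body unfolding annotated_instance_def by blast
      next
        assume "\<exists>a\<in>set H. (Tr (fst a), ground_args \<sigma> a) \<in> N"
        then obtain a where a: "a \<in> set H" "(Tr (fst a), ground_args \<sigma> a) \<in> N" by blast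
        then have "(fst a, ground_args \<sigma> a) \<in> ?D"
          using Tr_Fa in_Sch[OF _ \<sigma>] unfolding annotated_instance_def by blast
        then show False using contra a(1) by blast
      qed
    qed
  qed
qed

lemma annotation_reduct_model:
  assumes cs: "cs \<noteq> []" and ics_wf: "\<forall>ic\<in>set ics. wf_ic Sch ar cs ic"
    and ext: "\<forall>P\<in>set Sch. \<forall>t. (Ext P,t) \<in> M \<longleftrightarrow> (P,t) \<in> D0"
    and sat: "satisfies_ics cs bi ics D'"
  shows "reduct_model cs bi (repair_prog Sch ar ics) M (annotation Sch D0 D' M)"
proof -
  have "ic_rules_hold cs bi ic M (annotation Sch D0 D' M)" if "ic \<in> set ics" for ic
    using ic_rules_hold_annotation[OF _ _ ext] ics_wf sat that unfolding satisfies_ics_def by blast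
  moreover have "schema_rules_hold cs ar P M (annotation Sch D0 D' M)" if "P \<in> set Sch" for P
    using that ext unfolding schema_rules_hold_def by auto
  ultimately show ?thesis unfolding reduct_model_repair_prog_iff[OF cs] by blast
qed

lemma annotated_instance_closed:
  assumes schema: "\<forall>P\<in>set Sch. schema_rules_hold cs ar P M N"
    and agree: "\<forall>x\<in>M. fst x \<notin> repair_preds Sch \<longrightarrow> x \<in> N"
    and ext: "\<forall>P\<in>set Sch. \<forall>t. (Ext P,t) \<in> M \<longleftrightarrow> (P,t) \<in> D0"
    and D0: "instance_over Sch ar cs D0"
    and Tr_wf: "\<forall>P t. (Tr P,t) \<in> N \<longrightarrow> length t = ar P \<and> set t \<subseteq> set cs"
    and P: "P \<in> set Sch"
  shows "(P,t) \<in> D0 \<or> (Tr P,t) \<in> N \<Longrightarrow> (St P,t) \<in> N"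
    and "(Tr P,t) \<in> N \<Longrightarrow> (Fa P,t) \<notin> N"
proof -
  have rules: "schema_rules_hold cs ar P M N" using schema P by blast
  assume "(P,t) \<in> D0 \<or> (Tr P,t) \<in> N"
  then show "(St P,t) \<in> N"
  proof
    assume D: "(P,t) \<in> D0"
    then have "(Ext P,t) \<in> N" using ext agree P by force
    moreover have "length t = ar P" "set t \<subseteq> set cs" using D0 D unfolding instance_over_def by auto
    ultimately show ?thesis using rules unfolding schema_rules_hold_def by blast
  next
    assume "(Tr P,t) \<in> N"
    then show ?thesis using rules Tr_wf unfolding schema_rules_hold_def by blast
  qed
next
  assume "(Tr P,t) \<in> N"
  then show "(Fa P,t) \<notin> N"
    using schema P Tr_wf unfolding schema_rules_hold_def by blast
qed

lemma annotation_annotated_instance_subset: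
  assumes schema: "\<forall>P\<in>set Sch. schema_rules_hold cs ar P M N"
    and agree: "\<forall>x\<in>M. fst x \<notin> repair_preds Sch \<longrightarrow> x \<in> N"
    and ext: "\<forall>P\<in>set Sch. \<forall>t. (Ext P,t) \<in> M \<longleftrightarrow> (P,t) \<in> D0"
    and D0: "instance_over Sch ar cs D0"
    and Tr_wf: "\<forall>P t. (Tr P,t) \<in> N \<longrightarrow> length t = ar P \<and> set t \<subseteq> set cs"
  shows "annotation Sch D0 (annotated_instance Sch D0 N) M \<subseteq> N"
proof
  note closed = annotated_instance_closed[OF schema agree ext D0 Tr_wf]
  fix x assume x: "x \<in> annotation Sch D0 (annotated_instance Sch D0 N) M"
  have SS: "(SS P,t) \<in> N" if "P \<in> set Sch" "(P,t) \<in> D0 \<or> (Tr P,t) \<in> N" "(Fa P,t) \<notin> M" for P t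
  proof -
    have "length t = ar P \<and> set t \<subseteq> set cs" using that(2) D0 Tr_wf unfolding instance_over_def by blast
    then show ?thesis using closed(1)[OF that(1,2)] that(1,3) schema unfolding schema_rules_hold_def by blast
  qed
  show "x \<in> N"
    using x agree closed SS unfolding annotation_def annotated_instance_def by auto
qed

lemma instance_over_annotated_instance:
  assumes "instance_over Sch ar cs D0"
    and "\<forall>P t. (Tr P,t) \<in> N \<longrightarrow> length t = ar P \<and> set t \<subseteq> set cs"
  shows "instance_over Sch ar cs (annotated_instance Sch D0 N)"
  using assms unfolding instance_over_def annotated_instance_def by blast

lemma intensional_stable_imp_repair:
  assumes cs: "cs \<noteq> []" and D0: "instance_over Sch ar cs D0"
    and ics_wf: "\<forall>ic\<in>set ics. wf_ic Sch ar cs ic"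
    and ext: "\<forall>P\<in>set Sch. \<forall>t. (Ext P,t) \<in> M \<longleftrightarrow> (P,t) \<in> D0"
    and Tr_wf: "\<forall>P t. (Tr P,t) \<in> M \<longrightarrow> length t = ar P \<and> set t \<subseteq> set cs"
    and stable: "intensional_stable cs bi (repair_prog Sch ar ics) (repair_preds Sch) M"
  defines "D' \<equiv> annotated_instance Sch D0 M"
  shows "is_repair Sch ar cs bi ics D0 D' \<and> annotation Sch D0 D' M = M"
proof -
  have model: "reduct_model cs bi (repair_prog Sch ar ics) M M"
    and minimal: "\<not> (\<exists>N. N \<subset> M \<and> (\<forall>x\<in>M. fst x \<notin> repair_preds Sch \<longrightarrow> x \<in> N) \<and>
        reduct_model cs bi (repair_prog Sch ar ics) M N)"
    using stable unfolding intensional_stable_def by blast+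
  have ic_rules: "\<forall>ic\<in>set ics. ic_rules_hold cs bi ic M M"
    and schema: "\<forall>P\<in>set Sch. schema_rules_hold cs ar P M M"
    using model unfolding reduct_model_repair_prog_iff[OF cs] by blast+
  have agree: "\<forall>x\<in>M. fst x \<notin> repair_preds Sch \<longrightarrow> x \<in> M" by blast
  note closed = annotated_instance_closed[OF schema agree ext D0 Tr_wf]
  have inst: "instance_over Sch ar cs D'"
    unfolding D'_def using instance_over_annotated_instance[OF D0 Tr_wf] .
  have sat: "satisfies_ics cs bi ics D'"
    unfolding satisfies_ics_def D'_def
    using ic_sat_annotated_instance[OF _ _ ext closed] ics_wf ic_rules by blast
  have competitor: "False" if "annotation Sch D0 D'' M \<subset> M" "satisfies_ics cs bi ics D''" for D''
  proof -
    have "reduct_model cs bi (repair_prog Sch ar ics) M (annotation Sch D0 D'' M)"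
      using that(2) by (rule annotation_reduct_model[OF cs ics_wf ext])
    moreover have "\<forall>x\<in>M. fst x \<notin> repair_preds Sch \<longrightarrow> x \<in> annotation Sch D0 D'' M"
      by (simp add: annotation_agrees)
    ultimately show False using minimal that(1) by blast
  qed
  have "annotation Sch D0 D' M \<subseteq> M"
    unfolding D'_def by (rule annotation_annotated_instance_subset[OF schema agree ext D0 Tr_wf])
  then have M_eq: "annotation Sch D0 D' M = M" using competitor sat by blast
  have "\<not> symdiff D0 D'' \<subset> symdiff D0 D'"
    if "instance_over Sch ar cs D''" "satisfies_ics cs bi ics D''" for D''
  proof
    assume "symdiff D0 D'' \<subset> symdiff D0 D'"
    then have "annotation Sch D0 D'' M \<subset> annotation Sch D0 D' M"
      by (rule iffD2[OF annotation_psubset_iff[OF instance_over_rel_names[OF D0]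
        instance_over_rel_names[OF that(1)] instance_over_rel_names[OF inst]]])
    then have "annotation Sch D0 D'' M \<subset> M" using M_eq by simp
    then show False using competitor that(2) by blast
  qed
  then show ?thesis using inst sat M_eq unfolding is_repair_def by blast
qed

lemma repair_imp_intensional_stable:
  assumes cs: "cs \<noteq> []" and D0: "instance_over Sch ar cs D0"
    and ics_wf: "\<forall>ic\<in>set ics. wf_ic Sch ar cs ic"
    and ext: "\<forall>P\<in>set Sch. \<forall>t. (Ext P,t) \<in> M \<longleftrightarrow> (P,t) \<in> D0"
    and Tr_wf: "\<forall>P t. (Tr P,t) \<in> M \<longrightarrow> length t = ar P \<and> set t \<subseteq> set cs"
    and repair: "is_repair Sch ar cs bi ics D0 D'" and M_eq: "annotation Sch D0 D' M = M"
  shows "intensional_stable cs bi (repair_prog Sch ar ics) (repair_preds Sch) M"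
  unfolding intensional_stable_def
proof (intro conjI notI)
  have inst: "instance_over Sch ar cs D'" and sat: "satisfies_ics cs bi ics D'"
    and minimal: "\<not> (\<exists>D''. instance_over Sch ar cs D'' \<and> satisfies_ics cs bi ics D'' \<and>
              symdiff D0 D'' \<subset> symdiff D0 D')"
    using repair unfolding is_repair_def by blast+
  show "reduct_model cs bi (repair_prog Sch ar ics) M M"
    using annotation_reduct_model[OF cs ics_wf ext sat] M_eq by simp
  assume "\<exists>N. N \<subset> M \<and> (\<forall>x\<in>M. fst x \<notin> repair_preds Sch \<longrightarrow> x \<in> N) \<and>
      reduct_model cs bi (repair_prog Sch ar ics) M N"
  then obtain N where NM: "N \<subset> M" and agree: "\<forall>x\<in>M. fst x \<notin> repair_preds Sch \<longrightarrow> x \<in> N"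
    and model: "reduct_model cs bi (repair_prog Sch ar ics) M N" by blast
  have ic_rules: "\<forall>ic\<in>set ics. ic_rules_hold cs bi ic M N"
    and schema: "\<forall>P\<in>set Sch. schema_rules_hold cs ar P M N"
    using model unfolding reduct_model_repair_prog_iff[OF cs] by blast+
  have Tr_wf_N: "\<forall>P t. (Tr P,t) \<in> N \<longrightarrow> length t = ar P \<and> set t \<subseteq> set cs"
    using Tr_wf NM by blast
  note closed = annotated_instance_closed[OF schema agree ext D0 Tr_wf_N]
  define D'' where "D'' = annotated_instance Sch D0 N"
  have inst'': "instance_over Sch ar cs D''"
    unfolding D''_def using instance_over_annotated_instance[OF D0 Tr_wf_N] .
  have sat'': "satisfies_ics cs bi ics D''"
    unfolding satisfies_ics_def D''_def
    using ic_sat_annotated_instance[OF _ _ ext closed] ics_wf ic_rules by blast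
  have "annotation Sch D0 D'' M \<subset> annotation Sch D0 D' M"
    using annotation_annotated_instance_subset[OF schema agree ext D0 Tr_wf_N] NM M_eq
    unfolding D''_def by blast
  then have "symdiff D0 D'' \<subset> symdiff D0 D'"
    by (rule iffD1[OF annotation_psubset_iff[OF instance_over_rel_names[OF D0]
      instance_over_rel_names[OF inst''] instance_over_rel_names[OF inst]]])
  then show False using minimal inst'' sat'' by blast
qed

section \<open>The query program\<close>

lemma reduct_model_cong:
  assumes preds: "\<forall>r\<in>set Pr. \<forall>a\<in>set (rhead r) \<union> set (rpos r) \<union> set (rneg r). fst a \<in> Q"
    and M: "\<And>x. fst x \<in> Q \<Longrightarrow> x \<in> M \<longleftrightarrow> x \<in> M'"
    and N: "\<And>x. fst x \<in> Q \<Longrightarrow> x \<in> N \<longleftrightarrow> x \<in> N'"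
  shows "reduct_model cs bi Pr M N \<longleftrightarrow> reduct_model cs bi Pr M' N'"
proof -
  have "rule_sat bi r M N \<sigma> \<longleftrightarrow> rule_sat bi r M' N' \<sigma>" if r: "r \<in> set Pr" for r \<sigma>
  proof -
    have Q: "fst (gatom \<sigma> a) \<in> Q" if "a \<in> set (rhead r) \<union> set (rpos r) \<union> set (rneg r)" for a
      using preds r that by simp
    have "\<forall>a\<in>set (rpos r). gatom \<sigma> a \<in> N \<longleftrightarrow> gatom \<sigma> a \<in> N'"
      "\<forall>a\<in>set (rneg r). gatom \<sigma> a \<in> M \<longleftrightarrow> gatom \<sigma> a \<in> M'"
      "\<forall>a\<in>set (rhead r). gatom \<sigma> a \<in> N \<longleftrightarrow> gatom \<sigma> a \<in> N'"
      using M N Q by blast+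
    then show ?thesis unfolding rule_sat_def by blast
  qed
  then show ?thesis unfolding reduct_model_iff_rule_sat by blast
qed

lemma query_program_preds:
  assumes "query_program Sch ar arq cs ans PQ"
  shows "\<forall>r\<in>set PQ. \<forall>a\<in>set (rhead r) \<union> set (rpos r) \<union> set (rneg r).
           fst a \<in> defined_preds PQ \<or> (\<exists>P\<in>set Sch. fst a = SS P)"
    and "p \<in> defined_preds PQ \<Longrightarrow> \<exists>q. p = Qp q"
proof -
  have heads: "\<forall>r\<in>set PQ. \<forall>a\<in>set (rhead r). \<exists>q. fst a = Qp q"
    and bodies: "\<forall>r\<in>set PQ. \<forall>a\<in>set (rpos r) \<union> set (rneg r).
        (\<exists>P\<in>set Sch. fst a = SS P) \<or> fst a \<in> defined_preds PQ"
    using assms unfolding query_program_def by blast+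
  show "\<forall>r\<in>set PQ. \<forall>a\<in>set (rhead r) \<union> set (rpos r) \<union> set (rneg r).
           fst a \<in> defined_preds PQ \<or> (\<exists>P\<in>set Sch. fst a = SS P)"
    using bodies unfolding defined_preds_def by blast
  show "p \<in> defined_preds PQ \<Longrightarrow> \<exists>q. p = Qp q"
    using heads unfolding defined_preds_def by blast
qed

lemma query_program_consts: "query_program Sch ar arq cs ans PQ \<Longrightarrow> \<forall>r\<in>set PQ. rule_consts r \<subseteq> set cs"
  unfolding query_program_def by blast

lemma query_interp_agrees:
  assumes qp: "query_program Sch ar arq cs ans PQ"
    and E: "\<forall>x\<in>E. \<exists>P\<in>set Sch. fst x = SS P"
    and SS: "\<And>P t. P \<in> set Sch \<Longrightarrow> (SS P,t) \<in> M \<longleftrightarrow> (SS P,t) \<in> E"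
    and x: "fst x \<in> defined_preds PQ \<or> (\<exists>P\<in>set Sch. fst x = SS P)"
  shows "x \<in> M \<longleftrightarrow> x \<in> E \<union> {x\<in>M. fst x \<in> defined_preds PQ}"
proof -
  have E_def: "fst y \<notin> defined_preds PQ" if "y \<in> E" for y
    using E that query_program_preds(2)[OF qp] by force
  show ?thesis
  proof (cases "fst x \<in> defined_preds PQ")
    case True
    then show ?thesis using E_def by blast
  next
    case False
    then obtain P where P: "P \<in> set Sch" "x = (SS P, snd x)" using x by (metis prod.collapse)
    have "x \<in> M \<longleftrightarrow> x \<in> E" using SS[OF P(1), of "snd x"] P(2) by simp
    then show ?thesis using False by blast
  qed
qed

lemma intensional_stable_imp_stable_model:
  assumes qp: "query_program Sch ar arq cs ans PQ"
    and E: "\<forall>x\<in>E. \<exists>P\<in>set Sch. fst x = SS P"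
    and SS: "\<And>P t. P \<in> set Sch \<Longrightarrow> (SS P,t) \<in> M \<longleftrightarrow> (SS P,t) \<in> E"
    and stable: "intensional_stable cs bi PQ (defined_preds PQ) M"
  shows "stable_model cs bi PQ E (E \<union> {x\<in>M. fst x \<in> defined_preds PQ})"
proof -
  define MQ where "MQ = E \<union> {x\<in>M. fst x \<in> defined_preds PQ}"
  define Q where "Q = {p. p \<in> defined_preds PQ \<or> (\<exists>P\<in>set Sch. p = SS P)}"
  have preds: "\<forall>r\<in>set PQ. \<forall>a\<in>set (rhead r) \<union> set (rpos r) \<union> set (rneg r). fst a \<in> Q"
    using query_program_preds(1)[OF qp] unfolding Q_def by blast
  have M_MQ: "x \<in> M \<longleftrightarrow> x \<in> MQ" if "fst x \<in> Q" for x
    using query_interp_agrees[OF qp E SS] that unfolding MQ_def Q_def by blast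
  have E_def: "fst y \<notin> defined_preds PQ" if "y \<in> E" for y
    using E that query_program_preds(2)[OF qp] by force
  have model: "reduct_model cs bi PQ M M"
    and minimal: "\<not> (\<exists>N. N \<subset> M \<and> (\<forall>x\<in>M. fst x \<notin> defined_preds PQ \<longrightarrow> x \<in> N) \<and>
        reduct_model cs bi PQ M N)"
    using stable unfolding intensional_stable_def by blast+
  have "\<not> (\<exists>N. N \<subset> MQ \<and> E \<subseteq> N \<and> reduct_model cs bi PQ MQ N)"
  proof
    assume "\<exists>N. N \<subset> MQ \<and> E \<subseteq> N \<and> reduct_model cs bi PQ MQ N"
    then obtain N where N: "N \<subset> MQ" "E \<subseteq> N" and model_N: "reduct_model cs bi PQ MQ N" by blast
    define N' where "N' = {x\<in>M. fst x \<notin> defined_preds PQ} \<union> {x\<in>N. fst x \<in> defined_preds PQ}"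
    have "x \<in> N' \<longleftrightarrow> x \<in> N" if "fst x \<in> Q" for x
      using that M_MQ N E_def unfolding N'_def Q_def MQ_def by blast
    then have "reduct_model cs bi PQ M N'"
      using reduct_model_cong[OF preds M_MQ] model_N by blast
    moreover have "N' \<subset> M"
    proof -
      obtain x where "x \<in> MQ" "x \<notin> N" using N(1) by blast
      then have "x \<in> M" "x \<notin> N'" "fst x \<in> defined_preds PQ"
        using N(2) unfolding MQ_def N'_def by auto
      moreover have "N' \<subseteq> M" using N(1) E_def unfolding N'_def MQ_def by blast
      ultimately show ?thesis by blast
    qed
    moreover have "\<forall>x\<in>M. fst x \<notin> defined_preds PQ \<longrightarrow> x \<in> N'" unfolding N'_def by blast
    ultimately show False using minimal by blast
  qed
  moreover have "reduct_model cs bi PQ MQ MQ"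
    using reduct_model_cong[OF preds M_MQ M_MQ] model by blast
  ultimately show ?thesis unfolding stable_model_def MQ_def by blast
qed

lemma stable_model_imp_intensional_stable:
  assumes qp: "query_program Sch ar arq cs ans PQ"
    and E: "\<forall>x\<in>E. \<exists>P\<in>set Sch. fst x = SS P"
    and SS: "\<And>P t. P \<in> set Sch \<Longrightarrow> (SS P,t) \<in> M \<longleftrightarrow> (SS P,t) \<in> E"
    and stable: "stable_model cs bi PQ E (E \<union> {x\<in>M. fst x \<in> defined_preds PQ})"
  shows "intensional_stable cs bi PQ (defined_preds PQ) M"
proof -
  define MQ where "MQ = E \<union> {x\<in>M. fst x \<in> defined_preds PQ}"
  define Q where "Q = {p. p \<in> defined_preds PQ \<or> (\<exists>P\<in>set Sch. p = SS P)}"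
  have preds: "\<forall>r\<in>set PQ. \<forall>a\<in>set (rhead r) \<union> set (rpos r) \<union> set (rneg r). fst a \<in> Q"
    using query_program_preds(1)[OF qp] unfolding Q_def by blast
  have M_MQ: "x \<in> M \<longleftrightarrow> x \<in> MQ" if "fst x \<in> Q" for x
    using query_interp_agrees[OF qp E SS] that unfolding MQ_def Q_def by blast
  have E_def: "fst y \<notin> defined_preds PQ" if "y \<in> E" for y
    using E that query_program_preds(2)[OF qp] by force
  have model: "reduct_model cs bi PQ MQ MQ"
    and minimal: "\<not> (\<exists>N. N \<subset> MQ \<and> E \<subseteq> N \<and> reduct_model cs bi PQ MQ N)"
    using stable unfolding stable_model_def MQ_def by blast+
  have "\<not> (\<exists>N. N \<subset> M \<and> (\<forall>x\<in>M. fst x \<notin> defined_preds PQ \<longrightarrow> x \<in> N) \<and> reduct_model cs bi PQ M N)"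
  proof
    assume "\<exists>N. N \<subset> M \<and> (\<forall>x\<in>M. fst x \<notin> defined_preds PQ \<longrightarrow> x \<in> N) \<and> reduct_model cs bi PQ M N"
    then obtain N where N: "N \<subset> M" "\<forall>x\<in>M. fst x \<notin> defined_preds PQ \<longrightarrow> x \<in> N"
      and model_N: "reduct_model cs bi PQ M N" by blast
    define NQ where "NQ = E \<union> {x\<in>N. fst x \<in> defined_preds PQ}"
    have "x \<in> N \<longleftrightarrow> x \<in> NQ" if "fst x \<in> Q" for x
      using that M_MQ N E_def unfolding NQ_def Q_def MQ_def by blast
    then have "reduct_model cs bi PQ MQ NQ"
      using reduct_model_cong[OF preds M_MQ] model_N by blast
    moreover have "NQ \<subset> MQ"
    proof -
      obtain x where x: "x \<in> M" "x \<notin> N" using N(1) by blast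
      then have "fst x \<in> defined_preds PQ" using N(2) by blast
      moreover have "x \<notin> E" using E_def \<open>fst x \<in> defined_preds PQ\<close> by blast
      ultimately have "x \<in> MQ" "x \<notin> NQ" using x unfolding MQ_def NQ_def by blast+
      moreover have "NQ \<subseteq> MQ" using N(1) unfolding NQ_def MQ_def by blast
      ultimately show ?thesis by blast
    qed
    moreover have "E \<subseteq> NQ" unfolding NQ_def by blast
    ultimately show False using minimal by blast
  qed
  moreover have "reduct_model cs bi PQ M M"
    using reduct_model_cong[OF preds M_MQ M_MQ] model by blast
  ultimately show ?thesis unfolding intensional_stable_def by blast
qed

definition ground_heads :: "'c list \<Rightarrow> ('p,'c,'b) rule list \<Rightarrow> ('p \<times> 'c list) set" where
  "ground_heads cs Pr = {gatom \<sigma> a | \<sigma> a r. r \<in> set Pr \<and> a \<in> set (rhead r) \<and> range \<sigma> \<subseteq> set cs}"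

lemma stable_model_subset_heads:
  assumes "stable_model cs bi Pr E M"
  shows "M \<subseteq> E \<union> ground_heads cs Pr"
proof -
  have E: "E \<subseteq> M" and model: "reduct_model cs bi Pr M M"
    and minimal: "\<not> (\<exists>N. N \<subset> M \<and> E \<subseteq> N \<and> reduct_model cs bi Pr M N)"
    using assms unfolding stable_model_def by blast+
  define N where "N = M \<inter> (E \<union> ground_heads cs Pr)"
  have "reduct_model cs bi Pr M N"
    unfolding reduct_model_def
  proof (intro ballI allI impI)
    fix r \<sigma> assume r: "r \<in> set Pr" and \<sigma>: "range \<sigma> \<subseteq> set cs"
      and pos: "\<forall>a\<in>set (rpos r). gatom \<sigma> a \<in> N" and neg: "\<forall>a\<in>set (rneg r). gatom \<sigma> a \<notin> M"
      and bis: "bis_true bi \<sigma> (rbis r)"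
    have "\<exists>a\<in>set (rhead r). gatom \<sigma> a \<in> M"
      using model r \<sigma> pos neg bis unfolding reduct_model_def N_def by blast
    then obtain a where a: "a \<in> set (rhead r)" "gatom \<sigma> a \<in> M" by blast
    have "gatom \<sigma> a \<in> ground_heads cs Pr" unfolding ground_heads_def using r a \<sigma> by blast
    then show "\<exists>a\<in>set (rhead r). gatom \<sigma> a \<in> N" using a unfolding N_def by blast
  qed
  moreover have "E \<subseteq> N" using E unfolding N_def by blast
  ultimately have "\<not> N \<subset> M" using minimal by blast
  then show ?thesis unfolding N_def by blast
qed

lemma ground_heads_query_program:
  assumes qp: "query_program Sch ar arq cs ans PQ" and x: "x \<in> ground_heads cs PQ"
  shows "fst x \<in> defined_preds PQ" "length (snd x) = pn_arity ar arq (fst x)" "set (snd x) \<subseteq> set cs"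
proof -
  obtain \<sigma> a r where x_def: "x = gatom \<sigma> a" and r: "r \<in> set PQ" "a \<in> set (rhead r)"
    and \<sigma>: "range \<sigma> \<subseteq> set cs" using x unfolding ground_heads_def by blast
  show "fst x \<in> defined_preds PQ" using r unfolding x_def defined_preds_def by force
  have "\<forall>r\<in>set PQ. \<forall>a\<in>rule_atoms r. length (snd a) = pn_arity ar arq (fst a)"
    and "\<forall>r\<in>set PQ. rule_consts r \<subseteq> set cs" using qp unfolding query_program_def by blast+
  then have "length (snd a) = pn_arity ar arq (fst a)" "atom_consts a \<subseteq> set cs"
    using r rule_consts_subsetD(1) unfolding rule_atoms_def by blast+
  then show "length (snd x) = pn_arity ar arq (fst x)" "set (snd x) \<subseteq> set cs"
    using gatom_in[OF \<sigma>] unfolding x_def by (simp_all add: gatom_def)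
qed

lemma stable_model_query_split:
  assumes qp: "query_program Sch ar arq cs ans PQ" and stable: "stable_model cs bi PQ E MQ"
  shows "MQ = E \<union> {x\<in>MQ. fst x \<in> defined_preds PQ}"
proof -
  have "MQ \<subseteq> E \<union> ground_heads cs PQ" "E \<subseteq> MQ"
    using stable_model_subset_heads[OF stable] stable unfolding stable_model_def by blast+
  then show ?thesis using ground_heads_query_program(1)[OF qp] by blast
qed

section \<open>Consistent answers\<close>

lemma consistent_answer_imp_entailed:
  fixes PQ :: "(('r,'q) pn,'c,'b) rule list"
  assumes cs: "cs \<noteq> []" and D: "wf_db Sch ar cs D"
    and ics_wf: "\<forall>ic\<in>set ics. wf_ic Sch ar cs ic" and qp: "query_program Sch ar arq cs ans PQ"
    and answer: "cons_answer Sch ar cs bi ics D PQ ans a"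
  shows "so_entails (pn_arity ar arq) cs bi
           {FO (RD Sch ar cs D), SOMin (repair_preds Sch) (psi (repair_prog Sch ar ics)),
            SOMin (defined_preds PQ) (psi PQ)} (FAtom (Qp ans) (map Cn a))"
  unfolding so_entails_def
proof (intro allI impI)
  fix S :: "('c,'c,('r,'q) pn,'b) struct"
  assume S: "wf_struct (pn_arity ar arq) cs bi S"
    and "\<forall>g\<in>{FO (RD Sch ar cs D), SOMin (repair_preds Sch) (psi (repair_prog Sch ar ics)),
            SOMin (defined_preds PQ) (psi PQ)}. so_holds S g"
  then have RD: "so_holds S (FO (RD Sch ar cs D))"
    and repair_prog: "so_holds S (SOMin (repair_preds Sch) (psi (repair_prog Sch ar ics)))"
    and query_prog: "so_holds S (SOMin (defined_preds PQ) (psi PQ))" by simp_all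
  define M where "M = ground_facts cs (cint S) (pint S)"
  have herbrand: "herbrand_struct cs bi S"
    and ext: "\<forall>P\<in>set Sch. \<forall>t. (Ext P,t) \<in> M \<longleftrightarrow> (P,t) \<in> set D"
    using wf_struct_RD[OF S _ D] RD unfolding M_def by simp_all
  have Tr_wf: "\<forall>P t. (Tr P,t) \<in> M \<longrightarrow> length t = ar P \<and> set t \<subseteq> set cs"
    using ground_facts_wf[OF S] pn_arity.simps(2) unfolding M_def by metis
  have D0: "instance_over Sch ar cs (set D)" using D unfolding wf_db_def instance_over_def .
  define D' where "D' = annotated_instance Sch (set D) M"
  have "intensional_stable cs bi (repair_prog Sch ar ics) (repair_preds Sch) M"
    using repair_prog so_holds_SOMin_psi_iff[OF herbrand repair_prog_consts[OF ics_wf]]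
    unfolding M_def by blast
  then have repair: "is_repair Sch ar cs bi ics (set D) D'" and M_eq: "annotation Sch (set D) D' M = M"
    using intensional_stable_imp_repair[OF cs D0 ics_wf ext Tr_wf] unfolding D'_def by blast+
  define E :: "(('r,'q) pn \<times> 'c list) set" where "E = {(SS P, t) | P t. (P,t) \<in> D'}"
  have "instance_over Sch ar cs D'" using repair unfolding is_repair_def by blast
  then have E_SS: "\<forall>x\<in>E. \<exists>P\<in>set Sch. fst x = SS P" unfolding E_def instance_over_def by auto
  have SS: "(SS P,t) \<in> M \<longleftrightarrow> (SS P,t) \<in> E" if "P \<in> set Sch" for P t
    using annotation_fixpoint_SS[OF M_eq that] unfolding E_def by simp
  have "intensional_stable cs bi PQ (defined_preds PQ) M"
    using query_prog so_holds_SOMin_psi_iff[OF herbrand query_program_consts[OF qp]] unfolding M_def by blast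
  then have "stable_model cs bi PQ E (E \<union> {x\<in>M. fst x \<in> defined_preds PQ})"
    using intensional_stable_imp_stable_model[OF qp E_SS SS] by blast
  then have "(Qp ans, a) \<in> E \<union> {x\<in>M. fst x \<in> defined_preds PQ}"
    using answer repair unfolding cons_answer_def query_answer_def E_def by blast
  then have "(Qp ans, a) \<in> M" unfolding E_def by blast
  then have "map (cint S) a \<in> pint S (Qp ans)" unfolding M_def ground_facts_def by simp
  moreover have "sdom S \<noteq> {}" using S unfolding wf_struct_def by blast
  ultimately show "so_holds S (FO (FAtom (Qp ans) (map Cn a)))"
    by (simp add: so_holds_FO_atom del: so_holds.simps)
qed

text \<open>The P_f atoms of the inner set are there only because annotation reads P_starstar off
  the complement of P_f; with them, the P_starstar atoms of the model are exactly D'.\<close>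
lemma repair_query_model:
  fixes PQ :: "(('r,'q) pn,'c,'b) rule list" and MQ :: "(('r,'q) pn \<times> 'c list) set"
  assumes qp: "query_program Sch ar arq cs ans PQ"
    and D0: "instance_over Sch ar cs D0" and D': "instance_over Sch ar cs D'"
    and stable: "stable_model cs bi PQ {(SS P, t) | P t. (P,t) \<in> D'} MQ"
  defines "M \<equiv> annotation Sch D0 D' ({(Ext P,t) | P t. (P,t) \<in> D0} \<union>
     {(Fa P,t) | P t. (P,t) \<in> D0 - D'} \<union> {x\<in>MQ. fst x \<in> defined_preds PQ})"
  shows "annotation Sch D0 D' M = M"
    and "\<forall>P\<in>set Sch. \<forall>t. (Ext P,t) \<in> M \<longleftrightarrow> (P,t) \<in> D0"
    and "(p,t) \<in> M \<Longrightarrow> length t = pn_arity ar arq p \<and> set t \<subseteq> set cs"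
    and "(Qp q,t) \<in> M \<longleftrightarrow> (Qp q,t) \<in> MQ"
    and "{x\<in>M. fst x \<in> defined_preds PQ} = {x\<in>MQ. fst x \<in> defined_preds PQ}"
proof -
  have Qp: "p \<in> defined_preds PQ \<Longrightarrow> \<exists>q. p = Qp q" for p using query_program_preds(2)[OF qp] .
  show "annotation Sch D0 D' M = M"
    unfolding M_def using Qp by (intro annotation_idem) auto
  show "\<forall>P\<in>set Sch. \<forall>t. (Ext P,t) \<in> M \<longleftrightarrow> (P,t) \<in> D0"
    unfolding M_def using Qp by auto
  have MQ_heads: "x \<in> MQ \<Longrightarrow> \<exists>P. fst x = SS P \<or> x \<in> ground_heads cs PQ" for x
  proof -
    assume "x \<in> MQ"
    then have "x \<in> {(SS P, t) |P t. (P, t) \<in> D'} \<or> x \<in> ground_heads cs PQ"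
      using stable_model_subset_heads[OF stable] by blast
    then show ?thesis by auto
  qed
  have Qp_M: "(Qp q',t') \<in> M \<longleftrightarrow> (Qp q',t') \<in> MQ" for q' t'
  proof -
    have "(Qp q',t') \<in> MQ \<Longrightarrow> Qp q' \<in> defined_preds PQ"
      using MQ_heads ground_heads_query_program(1)[OF qp] by fastforce
    then show ?thesis unfolding M_def by auto
  qed
  then show "(Qp q,t) \<in> M \<longleftrightarrow> (Qp q,t) \<in> MQ" .
  have "x \<in> M \<longleftrightarrow> x \<in> MQ" if "fst x \<in> defined_preds PQ" for x
    using Qp[OF that] Qp_M by (metis prod.collapse)
  then show "{x\<in>M. fst x \<in> defined_preds PQ} = {x\<in>MQ. fst x \<in> defined_preds PQ}" by blast
  have D0_wf: "length t = ar P \<and> set t \<subseteq> set cs" if "(P,t) \<in> D0" for P t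
    using D0 that unfolding instance_over_def by blast
  have D'_wf: "length t = ar P \<and> set t \<subseteq> set cs" if "(P,t) \<in> D'" for P t
    using D' that unfolding instance_over_def by blast
  have MQ_wf: "length t = pn_arity ar arq p \<and> set t \<subseteq> set cs"
    if "(p,t) \<in> MQ" "p \<in> defined_preds PQ" for p t
  proof -
    have "(p,t) \<in> ground_heads cs PQ"
      using MQ_heads[OF that(1)] that(2) Qp by fastforce
    then show ?thesis using ground_heads_query_program[OF qp] by fastforce
  qed
  assume "(p,t) \<in> M"
  then show "length t = pn_arity ar arq p \<and> set t \<subseteq> set cs"
    unfolding M_def annotation_def by (auto dest: D0_wf D'_wf MQ_wf)
qed

lemma entailed_imp_consistent_answer:
  fixes PQ :: "(('r,'q) pn,'c,'b) rule list"
  assumes cs: "cs \<noteq> []" and D: "wf_db Sch ar cs D"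
    and ics_wf: "\<forall>ic\<in>set ics. wf_ic Sch ar cs ic" and qp: "query_program Sch ar arq cs ans PQ"
    and entailed: "so_entails (pn_arity ar arq) cs bi
           {FO (RD Sch ar cs D), SOMin (repair_preds Sch) (psi (repair_prog Sch ar ics)),
            SOMin (defined_preds PQ) (psi PQ)} (FAtom (Qp ans) (map Cn a))"
  shows "cons_answer Sch ar cs bi ics D PQ ans a"
  unfolding cons_answer_def query_answer_def
proof (intro allI impI)
  fix D' MQ
  assume repair: "is_repair Sch ar cs bi ics (set D) D'"
    and stable: "stable_model cs bi PQ {(SS P, t) | P t. (P,t) \<in> D'} MQ"
  define E :: "(('r,'q) pn \<times> 'c list) set" where "E = {(SS P, t) | P t. (P,t) \<in> D'}"
  have D0: "instance_over Sch ar cs (set D)" using D unfolding wf_db_def instance_over_def .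
  have D': "instance_over Sch ar cs D'" using repair unfolding is_repair_def by blast
  define M where "M = annotation Sch (set D) D' ({(Ext P,t) | P t. (P,t) \<in> set D} \<union>
     {(Fa P,t) | P t. (P,t) \<in> set D - D'} \<union> {x\<in>MQ. fst x \<in> defined_preds PQ})"
  note M = repair_query_model[OF qp D0 D' stable, folded M_def]
  define S where "S = herbrand_interp cs bi M"
  note S = herbrand_interp_wf[where M = M and arity = "pn_arity ar arq" and bi = bi, OF cs M(3), folded S_def]
  have Tr_wf: "\<forall>P t. (Tr P,t) \<in> M \<longrightarrow> length t = ar P \<and> set t \<subseteq> set cs"
    using M(3) pn_arity.simps(2) by metis
  have "so_holds S (FO (RD Sch ar cs D))"
    unfolding S_def using holds_RD_herbrand_interp[OF cs D M(2)] M(3) by simp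
  moreover have "so_holds S (SOMin (repair_preds Sch) (psi (repair_prog Sch ar ics)))"
    using so_holds_SOMin_psi_iff[OF S(2) repair_prog_consts[OF ics_wf]] S(3)
      repair_imp_intensional_stable[OF cs D0 ics_wf M(2) Tr_wf repair M(1)] by simp
  moreover have "so_holds S (SOMin (defined_preds PQ) (psi PQ))"
  proof -
    have E_SS: "\<forall>x\<in>E. \<exists>P\<in>set Sch. fst x = SS P" using D' unfolding E_def instance_over_def by auto
    have SS: "(SS P,t) \<in> M \<longleftrightarrow> (SS P,t) \<in> E" if "P \<in> set Sch" for P t
      using annotation_fixpoint_SS[OF M(1) that] unfolding E_def by simp
    have "MQ = E \<union> {x\<in>M. fst x \<in> defined_preds PQ}"
      using stable_model_query_split[OF qp stable] M(5) unfolding E_def by simp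
    then show ?thesis
      using so_holds_SOMin_psi_iff[OF S(2) query_program_consts[OF qp]] S(3)
        stable_model_imp_intensional_stable[OF qp E_SS SS] stable unfolding E_def by simp
  qed
  ultimately have "so_holds S (FO (FAtom (Qp ans) (map Cn a)))"
    using entailed S(1) unfolding so_entails_def by blast
  moreover have "sdom S \<noteq> {}" using S(1) unfolding wf_struct_def by blast
  ultimately have "(Qp ans, a) \<in> M"
    unfolding S_def by (simp add: so_holds_FO_atom herbrand_interp_def del: so_holds.simps)
  then show "(Qp ans, a) \<in> MQ" using M(4) by blast
qed

theorem proposition3:
  fixes Sch :: "'r list" and ar :: "'r \<Rightarrow> nat" and arq :: "'q \<Rightarrow> nat"
    and cs :: "'c list" and bi :: "'b \<Rightarrow> 'c list \<Rightarrow> bool"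
    and ics :: "('r,'c,'b) ic list" and D :: "('r \<times> 'c list) list"
    and PQ :: "(('r,'q) pn,'c,'b) rule list" and ans :: 'q and a :: "'c list"
  assumes "cs \<noteq> []"
    and "wf_db Sch ar cs D"
    and "\<forall>ic\<in>set ics. wf_ic Sch ar cs ic"
    and "query_program Sch ar arq cs ans PQ"
    and "set a \<subseteq> set cs"
  shows "cons_answer Sch ar cs bi ics D PQ ans a \<longleftrightarrow>
         so_entails (pn_arity ar arq) cs bi
           {FO (RD Sch ar cs D),
            SOMin (repair_preds Sch) (psi (repair_prog Sch ar ics)),
            SOMin (defined_preds PQ) (psi PQ)}
           (FAtom (Qp ans) (map Cn a))"
  using consistent_answer_imp_entailed[OF assms(1-4)] entailed_imp_consistent_answer[OF assms(1-4)]
  by blast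

end
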